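(* Let $(X,b,m)$ be a weighted graph satisfying (C), (B), (M), and let $D\subsetneq X$ be $d_L$-relatively dense. Then the linear control problem $(H,D)$ (with $r=2$) is closed-loop stabilizable: there exists a bounded linear operator $F\colon\ell_2(X,m)\to\ell_2(D,m|_D)$ such that $-H+\mathbf 1_DF$ generates a $C_0$-semigroup $(S^F_t)_{t\ge0}$ with $\|S^F_t\|\le Me^{\omega t}$ for all $t\ge0$, for some $M\ge1$, $\omega<0$.
   Context: Weighted graph $(X,b,m)$: $X$ countable, $m\colon X\to(0,\infty)$, $b$ symmetric non-negative with $b(x,x)=0$ and $\sum_yb(x,y)<\infty$. (C) connected via paths $(x_0,\dots,x_k)$ with $b(x_j,x_{j+1})>0$; (B) $\sup_x\frac1{m(x)}\sum_yb(x,y)<\infty$; (M) $\sup_xm(x)<\infty$. Length metric $d_L(x,y)=\inf\{\sum_j1/b(x_j,x_{j+1})\}$ over paths from $x$ to $y$; $D$ is $d_L$-relatively dense if $\inf\{R>0:\bigcup_{x\in D}\{y:d_L(x,y)\le R\}=X\}<\infty$. $H$ is the weighted Laplacian $Hf(x)=\frac1{m(x)}\sum_yb(x,y)(f(x)-f(y))$ on $\ell_2(X,m)$; $\mathbf 1_D\colon\ell_2(D,m|_D)\to\ell_2(X,m)$ is extension by zero; the control problem $(H,D)$ is $\dot f=-Hf+\mathbf 1_Du$. *)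

theory Defs
  imports "HOL-Analysis.Analysis"
begin

definition weighted_graph :: "('x \<Rightarrow> 'x \<Rightarrow> real) \<Rightarrow> ('x \<Rightarrow> real) \<Rightarrow> bool" where
  "weighted_graph b m \<longleftrightarrow>
     (\<forall>x. m x > 0) \<and> (\<forall>x y. b x y = b y x) \<and> (\<forall>x y. b x y \<ge> 0) \<and>
     (\<forall>x. b x x = 0) \<and> (\<forall>x. (b x) summable_on UNIV)"

definition graph_path :: "('x \<Rightarrow> 'x \<Rightarrow> real) \<Rightarrow> 'x list \<Rightarrow> 'x \<Rightarrow> 'x \<Rightarrow> bool" where
  "graph_path b p x y \<longleftrightarrow> p \<noteq> [] \<and> hd p = x \<and> last p = y \<and>
     (\<forall>j. Suc j < length p \<longrightarrow> b (p ! j) (p ! Suc j) > 0)"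

definition connected_graph :: "('x \<Rightarrow> 'x \<Rightarrow> real) \<Rightarrow> bool" where
  "connected_graph b \<longleftrightarrow> (\<forall>x y. \<exists>p. graph_path b p x y)"

definition bounded_degree :: "('x \<Rightarrow> 'x \<Rightarrow> real) \<Rightarrow> ('x \<Rightarrow> real) \<Rightarrow> bool" where
  "bounded_degree b m \<longleftrightarrow> (\<exists>C. \<forall>x. (1 / m x) * (\<Sum>\<^sub>\<infinity>y. b x y) \<le> C)"

definition bounded_measure :: "('x \<Rightarrow> real) \<Rightarrow> bool" where
  "bounded_measure m \<longleftrightarrow> (\<exists>C. \<forall>x. m x \<le> C)"

definition path_length :: "('x \<Rightarrow> 'x \<Rightarrow> real) \<Rightarrow> 'x list \<Rightarrow> real" where
  "path_length b p = (\<Sum>j<length p - 1. 1 / b (p ! j) (p ! Suc j))"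

definition dL :: "('x \<Rightarrow> 'x \<Rightarrow> real) \<Rightarrow> 'x \<Rightarrow> 'x \<Rightarrow> real" where
  "dL b x y = Inf {path_length b p | p. graph_path b p x y}"

text \<open>D is d_L-relatively dense: the set of admissible radii R is nonempty
  (equivalently, its infimum is finite).\<close>
definition relatively_dense :: "('x \<Rightarrow> 'x \<Rightarrow> real) \<Rightarrow> 'x set \<Rightarrow> bool" where
  "relatively_dense b D \<longleftrightarrow>
     {R. R > 0 \<and> (\<Union>x\<in>D. {y. dL b x y \<le> R}) = UNIV} \<noteq> {}"

text \<open>l2(S, m|_S), realised as functions vanishing outside S.\<close>
definition l2 :: "'x set \<Rightarrow> ('x \<Rightarrow> real) \<Rightarrow> ('x \<Rightarrow> real) set" where
  "l2 S m = {f. (\<forall>x. x \<notin> S \<longrightarrow> f x = 0) \<and> (\<lambda>x. m x * (f x)\<^sup>2) summable_on S}"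

definition l2norm :: "'x set \<Rightarrow> ('x \<Rightarrow> real) \<Rightarrow> ('x \<Rightarrow> real) \<Rightarrow> real" where
  "l2norm S m f = sqrt (\<Sum>\<^sub>\<infinity>x\<in>S. m x * (f x)\<^sup>2)"

definition bounded_linear_op ::
  "'x set \<Rightarrow> 'x set \<Rightarrow> ('x \<Rightarrow> real) \<Rightarrow> (('x \<Rightarrow> real) \<Rightarrow> ('x \<Rightarrow> real)) \<Rightarrow> bool" where
  "bounded_linear_op S T m F \<longleftrightarrow>
     (\<forall>f\<in>l2 S m. F f \<in> l2 T m) \<and>
     (\<forall>f\<in>l2 S m. \<forall>g\<in>l2 S m. \<forall>a::real. F (\<lambda>x. a * f x + g x) = (\<lambda>x. a * F f x + F g x)) \<and>
     (\<exists>C. \<forall>f\<in>l2 S m. l2norm T m (F f) \<le> C * l2norm S m f)"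

definition ext_zero :: "'x set \<Rightarrow> ('x \<Rightarrow> real) \<Rightarrow> ('x \<Rightarrow> real)" where
  "ext_zero D u = (\<lambda>x. if x \<in> D then u x else 0)"

definition laplacian :: "('x \<Rightarrow> 'x \<Rightarrow> real) \<Rightarrow> ('x \<Rightarrow> real) \<Rightarrow> ('x \<Rightarrow> real) \<Rightarrow> ('x \<Rightarrow> real)" where
  "laplacian b m f = (\<lambda>x. (1 / m x) * (\<Sum>\<^sub>\<infinity>y. b x y * (f x - f y)))"

definition C0_semigroup :: "('x \<Rightarrow> real) \<Rightarrow> (real \<Rightarrow> ('x \<Rightarrow> real) \<Rightarrow> ('x \<Rightarrow> real)) \<Rightarrow> bool" where
  "C0_semigroup m S \<longleftrightarrow>
     (\<forall>t\<ge>0. bounded_linear_op UNIV UNIV m (S t)) \<and>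
     (\<forall>f\<in>l2 UNIV m. S 0 f = f) \<and>
     (\<forall>t\<ge>0. \<forall>s\<ge>0. \<forall>f\<in>l2 UNIV m. S (t + s) f = S t (S s f)) \<and>
     (\<forall>f\<in>l2 UNIV m. ((\<lambda>t. l2norm UNIV m (\<lambda>x. S t f x - f x)) \<longlongrightarrow> 0) (at_right 0))"

text \<open>The (everywhere defined) operator A generates S: S is a C_0-semigroup whose generator
  (defined as the strong limit of (S t f - f)/t as t \<rightarrow> 0+, with domain the set of f for which
  this limit exists) has domain all of l2(X,m) and coincides with A.\<close>
definition generates :: "('x \<Rightarrow> real) \<Rightarrow> (('x \<Rightarrow> real) \<Rightarrow> ('x \<Rightarrow> real)) \<Rightarrow>
    (real \<Rightarrow> ('x \<Rightarrow> real) \<Rightarrow> ('x \<Rightarrow> real)) \<Rightarrow> bool" where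
  "generates m A S \<longleftrightarrow> C0_semigroup m S \<and>
     (\<forall>f\<in>l2 UNIV m. ((\<lambda>t. l2norm UNIV m (\<lambda>x. (S t f x - f x) / t - A f x)) \<longlongrightarrow> 0) (at_right 0))"

end

(*
  The feedback F f = -f on D makes the closed-loop generator A = -H - 1_D a bounded operator
  (H is bounded by (B)), and Green's formula gives <A f, f> = -(||f||_D^2 + Q(f)/2) with the
  energy Q(f) = sum_{x,y} b(x,y) (f(x) - f(y))^2.  The semigroup is exp(tA) in the Banach
  algebra of bounded operators on l2(X,m); it decays exponentially as soon as A is strictly
  dissipative, i.e. as soon as the observability estimate ||f||^2 <= c (||f||_D^2 + Q(f)/2)
  holds.  For the latter, join each y outside D to some x in D by a path of d_L-length at
  most L.  Every edge of such a path has weight at least 1/L, so by (B) and (M) the path has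
  at most K = CML edges, and telescoping gives m(y) f(y)^2 <= const (m(x) f(x)^2 + energy
  along the path).  Summing over y, each vertex and each edge is charged by at most (K+1)^K
  paths, because the heavy edges form a graph of degree at most K.
*)
theory Submission
  imports Defs
begin

lemma sq_summable_mult:
  fixes f g :: "'a \<Rightarrow> real"
  assumes "(\<lambda>x. (f x)\<^sup>2) summable_on A" "(\<lambda>x. (g x)\<^sup>2) summable_on A"
  shows "(\<lambda>x. f x * g x) summable_on A"
proof (rule abs_summable_summable, rule abs_summable_product)
  show "(\<lambda>x. norm (f x * f x)) summable_on A" "(\<lambda>x. norm (g x * g x)) summable_on A"
    using assms by (simp_all add: power2_eq_square)
qed

lemma sq_summable_add:
  fixes f g :: "'a \<Rightarrow> real"
  assumes "(\<lambda>x. (f x)\<^sup>2) summable_on A" "(\<lambda>x. (g x)\<^sup>2) summable_on A"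
  shows "(\<lambda>x. (f x + g x)\<^sup>2) summable_on A"
proof -
  have "(\<lambda>x. (f x)\<^sup>2 + (g x)\<^sup>2 + 2 * (f x * g x)) summable_on A"
    by (intro summable_on_add summable_on_cmult_right sq_summable_mult assms)
  then show ?thesis by (simp add: power2_sum mult.assoc)
qed

lemma sq_summable_scale:
  fixes f :: "'a \<Rightarrow> real"
  assumes "(\<lambda>x. (f x)\<^sup>2) summable_on A"
  shows "(\<lambda>x. (c * f x)\<^sup>2) summable_on A"
  using summable_on_cmult_right[OF assms, of "c\<^sup>2"] by (simp add: power_mult_distrib)

lemma summable_on_diff:
  fixes f g :: "'a \<Rightarrow> real"
  assumes "f summable_on A" "g summable_on A"
  shows "(\<lambda>x. f x - g x) summable_on A"
  using summable_on_add[OF assms(1) summable_on_uminus[THEN iffD2, OF assms(2)]] by simp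

lemma infsum_diff:
  fixes f g :: "'a \<Rightarrow> real"
  assumes "f summable_on A" "g summable_on A"
  shows "(\<Sum>\<^sub>\<infinity>x\<in>A. f x - g x) = (\<Sum>\<^sub>\<infinity>x\<in>A. f x) - (\<Sum>\<^sub>\<infinity>x\<in>A. g x)"
  using infsum_add[OF assms(1) summable_on_uminus[THEN iffD2, OF assms(2)]]
  by (simp add: infsum_uminus)

section \<open>The Hilbert space of square-summable functions\<close>

typedef 'a ell2 = "{f::'a \<Rightarrow> real. (\<lambda>x. (f x)\<^sup>2) summable_on UNIV}"
  morphisms ell2_fun Ell2
  by (rule exI[of _ "\<lambda>_. 0"]) auto

setup_lifting type_definition_ell2

instantiation ell2 :: (type) real_inner
begin

lift_definition zero_ell2 :: "'a ell2" is "\<lambda>_. 0" by simp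
lift_definition plus_ell2 :: "'a ell2 \<Rightarrow> 'a ell2 \<Rightarrow> 'a ell2" is "\<lambda>f g x. f x + g x"
  by (rule sq_summable_add)
lift_definition uminus_ell2 :: "'a ell2 \<Rightarrow> 'a ell2" is "\<lambda>f x. - f x"
  by simp
lift_definition minus_ell2 :: "'a ell2 \<Rightarrow> 'a ell2 \<Rightarrow> 'a ell2" is "\<lambda>f g x. f x - g x"
  using sq_summable_add[where g = "\<lambda>x. - g x" for g] by simp
lift_definition scaleR_ell2 :: "real \<Rightarrow> 'a ell2 \<Rightarrow> 'a ell2" is "\<lambda>c f x. c * f x"
  by (rule sq_summable_scale)
lift_definition inner_ell2 :: "'a ell2 \<Rightarrow> 'a ell2 \<Rightarrow> real" is "\<lambda>f g. \<Sum>\<^sub>\<infinity>x. f x * g x" .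

definition norm_ell2 :: "'a ell2 \<Rightarrow> real" where "norm_ell2 x = sqrt (inner x x)"
definition sgn_ell2 :: "'a ell2 \<Rightarrow> 'a ell2" where "sgn_ell2 x = inverse (norm x) *\<^sub>R x"
definition dist_ell2 :: "'a ell2 \<Rightarrow> 'a ell2 \<Rightarrow> real" where "dist_ell2 x y = norm (x - y)"
definition uniformity_ell2 :: "('a ell2 \<times> 'a ell2) filter"
  where "uniformity_ell2 = (INF e\<in>{0<..}. principal {(x, y). dist x y < e})"
definition open_ell2 :: "'a ell2 set \<Rightarrow> bool"
  where "open_ell2 U = (\<forall>x\<in>U. \<forall>\<^sub>F (x', y) in uniformity. x' = x \<longrightarrow> y \<in> U)"

instance
proof
  fix x y z :: "'a ell2" and a b :: real
  show "a *\<^sub>R (x + y) = a *\<^sub>R x + a *\<^sub>R y"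
    by transfer (simp add: algebra_simps)
  show "(a + b) *\<^sub>R x = a *\<^sub>R x + b *\<^sub>R x"
    by transfer (simp add: algebra_simps)
  show "a *\<^sub>R b *\<^sub>R x = (a * b) *\<^sub>R x"
    by transfer (simp add: algebra_simps)
  show "1 *\<^sub>R x = x"
    by transfer simp
  show "x + y + z = x + (y + z)" by transfer (simp add: algebra_simps)
  show "x + y = y + x" by transfer (simp add: algebra_simps)
  show "0 + x = x" by transfer simp
  show "- x + x = 0" by transfer simp
  show "x - y = x + - y" by transfer simp
  show "dist x y = norm (x - y)" by (simp add: dist_ell2_def)
  show "uniformity = (INF e\<in>{0<..}. principal {(x::'a ell2, y). dist x y < e})"
    by (simp add: uniformity_ell2_def)
  show "\<And>U. open U \<longleftrightarrow> (\<forall>x\<in>U. \<forall>\<^sub>F (x', y) in uniformity. x' = (x::'a ell2) \<longrightarrow> y \<in> U)"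
    by (simp add: open_ell2_def)
  show "inner x y = inner y x" by transfer (simp add: mult.commute)
  show "inner (x + y) z = inner x z + inner y z"
  proof transfer
    fix f g h :: "'a \<Rightarrow> real"
    assume f: "(\<lambda>x. (f x)\<^sup>2) summable_on UNIV" and g: "(\<lambda>x. (g x)\<^sup>2) summable_on UNIV"
      and h: "(\<lambda>x. (h x)\<^sup>2) summable_on UNIV"
    have "(\<Sum>\<^sub>\<infinity>x. (f x + g x) * h x) = (\<Sum>\<^sub>\<infinity>x. f x * h x + g x * h x)"
      by (simp add: distrib_right)
    also have "\<dots> = (\<Sum>\<^sub>\<infinity>x. f x * h x) + (\<Sum>\<^sub>\<infinity>x. g x * h x)"
      by (rule infsum_add[OF sq_summable_mult[OF f h] sq_summable_mult[OF g h]])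
    finally show "(\<Sum>\<^sub>\<infinity>x. (f x + g x) * h x) = (\<Sum>\<^sub>\<infinity>x. f x * h x) + (\<Sum>\<^sub>\<infinity>x. g x * h x)" .
  qed
  show "inner (a *\<^sub>R x) y = a * inner x y"
    by transfer (simp add: mult.assoc infsum_cmult_right')
  show "0 \<le> inner x x"
  proof transfer
    fix f :: "'a \<Rightarrow> real"
    show "0 \<le> (\<Sum>\<^sub>\<infinity>x. f x * f x)" by (rule infsum_nonneg) simp
  qed
  show "inner x x = 0 \<longleftrightarrow> x = 0"
  proof
    assume "inner x x = 0"
    then have h: "(\<Sum>\<^sub>\<infinity>i. ell2_fun x i * ell2_fun x i) = 0" by (simp add: inner_ell2_def)
    have s: "(\<lambda>i. ell2_fun x i * ell2_fun x i) summable_on UNIV"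
      using ell2_fun[of x] by (simp add: power2_eq_square)
    have z: "ell2_fun x i * ell2_fun x i = 0" for i
      by (rule nonneg_infsum_le_0D[where f="\<lambda>i. ell2_fun x i * ell2_fun x i" and A=UNIV])
        (use h s in simp_all)
    have "ell2_fun x = ell2_fun 0"
    proof
      fix i show "ell2_fun x i = ell2_fun 0 i" using z[of i] by (simp add: zero_ell2.rep_eq)
    qed
    then show "x = 0" by (simp add: ell2_fun_inject)
  next
    assume "x = 0" then show "inner x x = 0" by (simp add: inner_ell2_def zero_ell2.rep_eq)
  qed
  show "norm x = sqrt (inner x x)" by (simp add: norm_ell2_def)
qed (rule sgn_ell2_def)

end

lemma inner_ell2_eq: "inner x y = (\<Sum>\<^sub>\<infinity>i. ell2_fun x i * ell2_fun y i)"
  by transfer simp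

lemma ell2_summable: "(\<lambda>i. (ell2_fun x i)\<^sup>2) summable_on UNIV"
  using ell2_fun[of x] by simp

lemma norm_sq_ell2: "(norm x)\<^sup>2 = (\<Sum>\<^sub>\<infinity>i. (ell2_fun x i)\<^sup>2)"
  unfolding power2_norm_eq_inner inner_ell2_eq by (simp add: power2_eq_square)

lemma ell2_fun_plus: "ell2_fun (x + y) i = ell2_fun x i + ell2_fun y i"
  by (simp add: plus_ell2.rep_eq)

lemma ell2_fun_minus: "ell2_fun (x - y) i = ell2_fun x i - ell2_fun y i"
  by (simp add: minus_ell2.rep_eq)

lemma ell2_fun_scaleR: "ell2_fun (c *\<^sub>R x) i = c * ell2_fun x i"
  by (simp add: scaleR_ell2.rep_eq)

lemma finite_sum_le_norm_sq: "finite F \<Longrightarrow> (\<Sum>i\<in>F. (ell2_fun x i)\<^sup>2) \<le> (norm x)\<^sup>2"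
  unfolding norm_sq_ell2 by (rule finite_sum_le_infsum[OF ell2_summable]) auto

lemma bounded_linear_ell2_fun: "bounded_linear (\<lambda>x. ell2_fun x i)"
proof (rule bounded_linear_intro[where K = 1])
  show "norm (ell2_fun x i) \<le> norm x * 1" for x
    using finite_sum_le_norm_sq[of "{i}" x] abs_le_square_iff[of "ell2_fun x i" "norm x"] by simp
qed (simp_all add: ell2_fun_plus ell2_fun_scaleR)

lemma ell2_Cauchy_limit_bound:
  fixes X :: "nat \<Rightarrow> 'a ell2"
  assumes "Cauchy X" and lim: "\<And>i. (\<lambda>n. ell2_fun (X n) i) \<longlonglongrightarrow> g i" and "e > 0"
  shows "\<exists>N. \<forall>n\<ge>N. (\<lambda>i. (ell2_fun (X n) i - g i)\<^sup>2) summable_on UNIV \<and>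
           (\<Sum>\<^sub>\<infinity>i. (ell2_fun (X n) i - g i)\<^sup>2) \<le> e\<^sup>2"
proof -
  obtain N where N: "\<And>n k. n \<ge> N \<Longrightarrow> k \<ge> N \<Longrightarrow> norm (X n - X k) < e"
    using CauchyD[OF \<open>Cauchy X\<close> \<open>e > 0\<close>] by blast
  have finite_sums: "(\<Sum>i\<in>F. (ell2_fun (X n) i - g i)\<^sup>2) \<le> e\<^sup>2" if "n \<ge> N" "finite F" for n F
  proof (rule LIMSEQ_le_const2)
    show "(\<lambda>k. \<Sum>i\<in>F. (ell2_fun (X n) i - ell2_fun (X k) i)\<^sup>2)
        \<longlonglongrightarrow> (\<Sum>i\<in>F. (ell2_fun (X n) i - g i)\<^sup>2)"
      by (intro tendsto_intros lim)
    show "\<exists>N'. \<forall>k\<ge>N'. (\<Sum>i\<in>F. (ell2_fun (X n) i - ell2_fun (X k) i)\<^sup>2) \<le> e\<^sup>2"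
    proof (intro exI allI impI)
      fix k assume "k \<ge> N"
      have "(\<Sum>i\<in>F. (ell2_fun (X n) i - ell2_fun (X k) i)\<^sup>2) \<le> (norm (X n - X k))\<^sup>2"
        using finite_sum_le_norm_sq[OF \<open>finite F\<close>, of "X n - X k"] by (simp add: ell2_fun_minus)
      also have "\<dots> \<le> e\<^sup>2"
        using N[OF \<open>n \<ge> N\<close> \<open>k \<ge> N\<close>] by (intro power_mono) auto
      finally show "(\<Sum>i\<in>F. (ell2_fun (X n) i - ell2_fun (X k) i)\<^sup>2) \<le> e\<^sup>2" .
    qed
  qed
  show ?thesis
  proof (intro exI allI impI conjI)
    fix n assume "n \<ge> N"
    show s: "(\<lambda>i. (ell2_fun (X n) i - g i)\<^sup>2) summable_on UNIV"
      by (rule nonneg_bdd_above_summable_on) (use finite_sums \<open>n \<ge> N\<close> in \<open>auto intro!: bdd_aboveI\<close>)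
    show "(\<Sum>\<^sub>\<infinity>i. (ell2_fun (X n) i - g i)\<^sup>2) \<le> e\<^sup>2"
      by (rule infsum_le_finite_sums[OF s]) (use finite_sums \<open>n \<ge> N\<close> in auto)
  qed
qed

instance ell2 :: (type) banach
proof
  fix X :: "nat \<Rightarrow> 'a ell2" assume "Cauchy X"
  have "convergent (\<lambda>n. ell2_fun (X n) i)" for i
    using bounded_linear.Cauchy[OF bounded_linear_ell2_fun \<open>Cauchy X\<close>]
    by (simp add: Cauchy_convergent_iff)
  then obtain g where g: "\<And>i. (\<lambda>n. ell2_fun (X n) i) \<longlonglongrightarrow> g i"
    unfolding convergent_def by metis
  note bound = ell2_Cauchy_limit_bound[OF \<open>Cauchy X\<close> g]
  obtain N where N: "(\<lambda>i. (ell2_fun (X N) i - g i)\<^sup>2) summable_on UNIV"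
    using bound[of 1] by auto
  have "(\<lambda>i. (ell2_fun (X N) i + - (ell2_fun (X N) i - g i))\<^sup>2) summable_on UNIV"
    by (rule sq_summable_add[OF ell2_summable]) (use N in \<open>simp add: power2_commute\<close>)
  then have rep: "ell2_fun (X n - Ell2 g) i = ell2_fun (X n) i - g i" for n i
    by (simp add: ell2_fun_minus Ell2_inverse)
  have "X \<longlonglongrightarrow> Ell2 g"
  proof (rule LIMSEQ_I)
    fix e :: real assume "e > 0"
    then obtain N where "\<forall>n\<ge>N. (\<Sum>\<^sub>\<infinity>i. (ell2_fun (X n) i - g i)\<^sup>2) \<le> (e/2)\<^sup>2"
      using bound[of "e/2"] by auto
    then have "\<forall>n\<ge>N. (norm (X n - Ell2 g))\<^sup>2 \<le> (e/2)\<^sup>2"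
      by (simp add: norm_sq_ell2 rep)
    then have "\<forall>n\<ge>N. norm (X n - Ell2 g) \<le> e/2"
      using \<open>e > 0\<close> by (auto simp: power2_le_iff_abs_le)
    then show "\<exists>N. \<forall>n\<ge>N. norm (X n - Ell2 g) < e"
      using \<open>e > 0\<close> by force
  qed
  then show "convergent X" unfolding convergent_def by blast
qed

lemma infsum_weighted_Cauchy_Schwarz:
  fixes w a :: "'a \<Rightarrow> real"
  assumes w_nonneg: "\<And>x. 0 \<le> w x" and "w summable_on UNIV"
    and "(\<lambda>x. w x * (a x)\<^sup>2) summable_on UNIV"
  shows "(\<Sum>\<^sub>\<infinity>x. w x * a x)\<^sup>2 \<le> (\<Sum>\<^sub>\<infinity>x. w x) * (\<Sum>\<^sub>\<infinity>x. w x * (a x)\<^sup>2)"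
proof -
  have sq_u: "(sqrt (w x))\<^sup>2 = w x" and sq_v: "(sqrt (w x) * a x)\<^sup>2 = w x * (a x)\<^sup>2" for x
    using w_nonneg[of x] by (simp_all add: power_mult_distrib)
  define u where "u = Ell2 (\<lambda>x. sqrt (w x))"
  define v where "v = Ell2 (\<lambda>x. sqrt (w x) * a x)"
  have u: "ell2_fun u = (\<lambda>x. sqrt (w x))" and v: "ell2_fun v = (\<lambda>x. sqrt (w x) * a x)"
    unfolding u_def v_def using assms(2,3) by (simp_all add: Ell2_inverse sq_u sq_v)
  have "inner u v = (\<Sum>\<^sub>\<infinity>x. w x * a x)"
    unfolding inner_ell2_eq u v by (simp add: w_nonneg flip: mult.assoc)
  moreover have "inner u u = (\<Sum>\<^sub>\<infinity>x. w x)" "inner v v = (\<Sum>\<^sub>\<infinity>x. w x * (a x)\<^sup>2)"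
    unfolding inner_ell2_eq u v by (simp_all flip: power2_eq_square add: sq_u sq_v)
  ultimately show ?thesis
    using Cauchy_Schwarz_ineq[of u v] by simp
qed

text \<open>Needed only for \<open>norm 1 = 1\<close> in the operator algebra below.\<close>

instance ell2 :: (type) perfect_space
proof
  fix x :: "'a ell2"
  define v :: "'a ell2" where "v = Ell2 (\<lambda>i. if i = undefined then 1 else 0)"
  have "(\<lambda>i. (if i = undefined then 1 else 0 :: real)\<^sup>2) summable_on UNIV"
    by (rule summable_on_cong_neutral[THEN iffD1, of _ "{undefined}"]) auto
  then have "ell2_fun v = (\<lambda>i. if i = undefined then 1 else 0)"
    unfolding v_def by (rule Ell2_inverse[OF CollectI])
  then have "v \<noteq> 0"
    by (auto simp: zero_ell2.rep_eq dest: fun_cong[of _ _ undefined])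
  show "\<not> open {x}"
  proof
    assume "open {x}"
    then obtain e where "e > 0" and e: "\<And>y. dist y x < e \<Longrightarrow> y = x"
      by (auto simp: open_dist)
    define y where "y = x + (e / 2 / norm v) *\<^sub>R v"
    have "dist y x < e"
      using \<open>e > 0\<close> \<open>v \<noteq> 0\<close> by (simp add: y_def dist_norm)
    moreover have "y \<noteq> x"
      using \<open>e > 0\<close> \<open>v \<noteq> 0\<close> by (simp add: y_def)
    ultimately show False
      using e by blast
  qed
qed

section \<open>The Banach algebra of bounded operators\<close>

text \<open>A copy of \<open>'a \<Rightarrow>\<^sub>L 'a\<close> with composition as product, so that the library's
  \<open>exp\<close> on Banach algebras provides the semigroups.\<close>

typedef (overloaded) ('a::real_normed_vector) bop = "UNIV :: ('a \<Rightarrow>\<^sub>L 'a) set"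
  morphisms bop_rep Bop by auto

setup_lifting type_definition_bop

instantiation bop :: (real_normed_vector) real_normed_vector
begin
lift_definition zero_bop :: "'a bop" is 0 .
lift_definition plus_bop :: "'a bop \<Rightarrow> 'a bop \<Rightarrow> 'a bop" is "(+)" .
lift_definition minus_bop :: "'a bop \<Rightarrow> 'a bop \<Rightarrow> 'a bop" is "(-)" .
lift_definition uminus_bop :: "'a bop \<Rightarrow> 'a bop" is uminus .
lift_definition scaleR_bop :: "real \<Rightarrow> 'a bop \<Rightarrow> 'a bop" is scaleR .
lift_definition norm_bop :: "'a bop \<Rightarrow> real" is norm .
definition sgn_bop :: "'a bop \<Rightarrow> 'a bop" where "sgn_bop x = inverse (norm x) *\<^sub>R x"
definition dist_bop :: "'a bop \<Rightarrow> 'a bop \<Rightarrow> real" where "dist_bop x y = norm (x - y)"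
definition uniformity_bop :: "('a bop \<times> 'a bop) filter"
  where "uniformity_bop = (INF e\<in>{0<..}. principal {(x, y). dist x y < e})"
definition open_bop :: "'a bop set \<Rightarrow> bool"
  where "open_bop U = (\<forall>x\<in>U. \<forall>\<^sub>F (x', y) in uniformity. x' = x \<longrightarrow> y \<in> U)"
instance
proof
  fix x y z :: "'a bop" and a b :: real
  show "a *\<^sub>R (x + y) = a *\<^sub>R x + a *\<^sub>R y" by transfer (rule scaleR_add_right)
  show "(a + b) *\<^sub>R x = a *\<^sub>R x + b *\<^sub>R x" by transfer (rule scaleR_add_left)
  show "a *\<^sub>R b *\<^sub>R x = (a * b) *\<^sub>R x" by transfer (rule scaleR_scaleR)
  show "1 *\<^sub>R x = x" by transfer (rule scaleR_one)
  show "x + y + z = x + (y + z)" by transfer (rule add.assoc)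
  show "x + y = y + x" by transfer (rule add.commute)
  show "0 + x = x" by transfer (rule add_0_left)
  show "- x + x = 0" by transfer (rule left_minus)
  show "x - y = x + - y" by transfer (rule diff_conv_add_uminus)
  show "dist x y = norm (x - y)" by (simp add: dist_bop_def)
  show "uniformity = (INF e\<in>{0<..}. principal {(x::'a bop, y). dist x y < e})"
    by (simp add: uniformity_bop_def)
  show "\<And>U. open U \<longleftrightarrow> (\<forall>x\<in>U. \<forall>\<^sub>F (x', y) in uniformity. x' = (x::'a bop) \<longrightarrow> y \<in> U)"
    by (simp add: open_bop_def)
  show "norm x = 0 \<longleftrightarrow> x = 0" by transfer (rule norm_eq_zero)
  show "norm (x + y) \<le> norm x + norm y" by transfer (rule norm_triangle_ineq)
  show "norm (a *\<^sub>R x) = \<bar>a\<bar> * norm x" by transfer (rule norm_scaleR)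
qed (rule sgn_bop_def)
end

instantiation bop :: (real_normed_vector) "{times, one}"
begin
lift_definition times_bop :: "'a bop \<Rightarrow> 'a bop \<Rightarrow> 'a bop" is blinfun_compose .
lift_definition one_bop :: "'a bop" is id_blinfun .
instance ..
end

instance bop :: ("{real_normed_vector, perfect_space}") real_normed_algebra_1
proof
  fix x y z :: "'a bop" and a :: real
  show "x * y * z = x * (y * z)" by transfer (rule blinfun_eqI, simp)
  show "(x + y) * z = x * z + y * z" by transfer (rule blinfun_eqI, simp add: blinfun.bilinear_simps)
  show "x * (y + z) = x * y + x * z" by transfer (rule blinfun_eqI, simp add: blinfun.bilinear_simps)
  show "1 * x = x" by transfer (rule blinfun_eqI, simp)
  show "x * 1 = x" by transfer (rule blinfun_eqI, simp)
  show "(0::'a bop) \<noteq> 1"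
    by transfer (metis norm_blinfun_id norm_zero zero_neq_one)
  show "a *\<^sub>R x * y = a *\<^sub>R (x * y)" by transfer (rule blinfun_eqI, simp add: blinfun.bilinear_simps)
  show "x * a *\<^sub>R y = a *\<^sub>R (x * y)" by transfer (rule blinfun_eqI, simp add: blinfun.bilinear_simps)
  show "norm (x * y) \<le> norm x * norm y" by transfer (rule norm_blinfun_compose)
  show "norm (1::'a bop) = 1" by transfer simp
qed

lemma norm_bop_rep: "norm (bop_rep x) = norm x"
  by (simp add: norm_bop.rep_eq)

lemma bop_rep_minus: "bop_rep (x - y) = bop_rep x - bop_rep y"
  by (simp add: minus_bop.rep_eq)

instance bop :: ("{real_normed_vector, banach}") banach
proof
  fix X :: "nat \<Rightarrow> 'a bop" assume "Cauchy X"
  then have "Cauchy (\<lambda>n. bop_rep (X n))"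
    unfolding Cauchy_def dist_norm by (simp add: norm_bop_rep[symmetric] bop_rep_minus)
  then obtain L where L: "(\<lambda>n. bop_rep (X n)) \<longlonglongrightarrow> L"
    using Cauchy_convergent_iff convergent_def by blast
  have "X \<longlonglongrightarrow> Bop L"
  proof (rule metric_LIMSEQ_I)
    fix e :: real assume "e > 0"
    with L obtain N where "\<forall>n\<ge>N. dist (bop_rep (X n)) L < e"
      using metric_LIMSEQ_D by blast
    then show "\<exists>N. \<forall>n\<ge>N. dist (X n) (Bop L) < e"
      by (auto simp: dist_norm norm_bop_rep[symmetric] bop_rep_minus Bop_inverse)
  qed
  then show "convergent X" unfolding convergent_def by blast
qed

definition bop_apply :: "'a::real_normed_vector bop \<Rightarrow> 'a \<Rightarrow> 'a" where
  "bop_apply T x = blinfun_apply (bop_rep T) x"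

lemma bop_apply_mult: "bop_apply (S * T) x = bop_apply S (bop_apply T x)"
  by (simp add: bop_apply_def times_bop.rep_eq)

lemma bop_apply_one: "bop_apply 1 x = x"
  by (simp add: bop_apply_def one_bop.rep_eq)

lemma bop_apply_Bop: "bounded_linear f \<Longrightarrow> bop_apply (Bop (Blinfun f)) x = f x"
  by (simp add: bop_apply_def Bop_inverse bounded_linear_Blinfun_apply)

lemma bounded_bilinear_bop_apply: "bounded_bilinear bop_apply"
proof -
  have "bounded_linear bop_rep"
    by (rule bounded_linear_intro[where K = 1])
      (simp_all add: plus_bop.rep_eq scaleR_bop.rep_eq norm_bop_rep)
  then show ?thesis
    unfolding bop_apply_def[abs_def] by (rule bounded_bilinear.comp1[OF bounded_bilinear_blinfun_apply])
qed

interpretation bop_apply: bounded_bilinear bop_apply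
  by (rule bounded_bilinear_bop_apply)

lemma norm_bop_apply_le: "norm (bop_apply T x) \<le> norm T * norm x"
  by (simp add: bop_apply_def norm_blinfun flip: norm_bop_rep)

lemma exp_scaleR_add:
  fixes A :: "'a::{real_normed_algebra_1, banach}"
  shows "exp ((t + s) *\<^sub>R A) = exp (t *\<^sub>R A) * exp (s *\<^sub>R A)"
proof -
  have "(t *\<^sub>R A) * (s *\<^sub>R A) = (s *\<^sub>R A) * (t *\<^sub>R A)"
    by (simp add: mult.commute)
  then show ?thesis
    by (simp add: scaleR_add_left exp_add_commuting)
qed

lemma bop_exp_has_vector_derivative:
  fixes A :: "'a::{real_normed_vector, perfect_space, banach} bop"
  shows "((\<lambda>t. bop_apply (exp (t *\<^sub>R A)) x) has_vector_derivative bop_apply A (bop_apply (exp (s *\<^sub>R A)) x))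
    (at s)"
  using bounded_linear.has_vector_derivative[OF bop_apply.bounded_linear_left
      exp_scaleR_has_vector_derivative_left]
  by (simp add: bop_apply_mult)

lemma bop_exp_difference_quotient:
  fixes A :: "'a::{real_normed_vector, perfect_space, banach} bop"
  shows "((\<lambda>h. norm ((bop_apply (exp (h *\<^sub>R A)) x - x) /\<^sub>R h - bop_apply A x)) \<longlongrightarrow> 0) (at_right 0)"
proof -
  have lim: "((\<lambda>h. norm (bop_apply (exp (h *\<^sub>R A)) x - x - h *\<^sub>R bop_apply A x) / norm h) \<longlongrightarrow> 0) (at 0)"
    using bop_exp_has_vector_derivative[of A x 0]
    by (simp add: has_vector_derivative_def has_derivative_at bop_apply_one)
  have quotient: "norm (bop_apply (exp (h *\<^sub>R A)) x - x - h *\<^sub>R bop_apply A x) / norm h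
      = norm ((bop_apply (exp (h *\<^sub>R A)) x - x) /\<^sub>R h - bop_apply A x)" if "h \<noteq> 0" for h
  proof -
    have "(bop_apply (exp (h *\<^sub>R A)) x - x) /\<^sub>R h - bop_apply A x
        = inverse h *\<^sub>R (bop_apply (exp (h *\<^sub>R A)) x - x - h *\<^sub>R bop_apply A x)"
      using that by (simp add: scaleR_diff_right)
    then show ?thesis
      by (simp add: divide_inverse abs_inverse mult.commute)
  qed
  have "\<forall>\<^sub>F h in at 0. norm (bop_apply (exp (h *\<^sub>R A)) x - x - h *\<^sub>R bop_apply A x) / norm h
      = norm ((bop_apply (exp (h *\<^sub>R A)) x - x) /\<^sub>R h - bop_apply A x)"
    by (intro eventually_at_filter[THEN iffD2] always_eventually allI impI quotient)
  from Lim_transform_eventually[OF lim this] show ?thesis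
    by (rule tendsto_mono[OF at_le[OF subset_UNIV]])
qed

lemma bop_exp_strongly_continuous:
  fixes A :: "'a::{real_normed_vector, perfect_space, banach} bop"
  shows "((\<lambda>h. norm (bop_apply (exp (h *\<^sub>R A)) x - x)) \<longlongrightarrow> 0) (at_right 0)"
proof -
  have "continuous (at 0) (\<lambda>t. bop_apply (exp (t *\<^sub>R A)) x)"
    by (rule has_vector_derivative_continuous[OF bop_exp_has_vector_derivative])
  then have "((\<lambda>t. bop_apply (exp (t *\<^sub>R A)) x - x) \<longlongrightarrow> 0) (at 0)"
    by (simp add: continuous_at bop_apply_one LIM_zero)
  then show ?thesis
    by (rule tendsto_norm_zero[OF tendsto_mono[OF at_le[OF subset_UNIV]]])
qed

lemma bop_exp_decay:
  fixes A :: "'a::{real_inner, perfect_space, banach} bop"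
  assumes dissipative: "\<And>y. inner (bop_apply A y) y \<le> - \<delta> * (norm y)\<^sup>2" and "t \<ge> 0"
  shows "norm (bop_apply (exp (t *\<^sub>R A)) x) \<le> exp (- \<delta> * t) * norm x"
proof -
  define u where "u s = bop_apply (exp (s *\<^sub>R A)) x" for s
  define \<phi> where "\<phi> s = exp (2 * \<delta> * s) * inner (u s) (u s)" for s
  have "(\<phi> has_real_derivative
      2 * exp (2 * \<delta> * s) * (inner (bop_apply A (u s)) (u s) + \<delta> * inner (u s) (u s))) (at s)" for s
  proof -
    have "(u has_vector_derivative bop_apply A (u s)) (at s)"
      unfolding u_def[abs_def] by (rule bop_exp_has_vector_derivative)
    from bounded_bilinear.has_vector_derivative[OF bounded_bilinear_inner this this]
    have "((\<lambda>s. inner (u s) (u s)) has_real_derivative 2 * inner (bop_apply A (u s)) (u s)) (at s)"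
      by (simp add: has_real_derivative_iff_has_vector_derivative inner_commute)
    then show ?thesis
      unfolding \<phi>_def by (auto intro!: derivative_eq_intros simp: algebra_simps)
  qed
  moreover have "inner (bop_apply A y) y + \<delta> * inner y y \<le> 0" for y
    using dissipative[of y] by (simp add: power2_norm_eq_inner)
  ultimately have "\<phi> t \<le> \<phi> 0"
    by (intro DERIV_nonpos_imp_nonincreasing[OF \<open>t \<ge> 0\<close>])
      (metis mult_nonneg_nonpos exp_ge_zero mult_2 zero_le_mult_iff add_nonneg_nonneg)
  then have "exp (2 * \<delta> * t) * (norm (u t))\<^sup>2 \<le> (norm x)\<^sup>2"
    by (simp add: \<phi>_def u_def bop_apply_one power2_norm_eq_inner)
  then have "(norm (u t))\<^sup>2 \<le> (exp (- \<delta> * t) * norm x)\<^sup>2"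
    by (simp add: power_mult_distrib exp_minus field_simps flip: exp_double)
  then show ?thesis
    unfolding u_def by (rule power2_le_imp_le) simp
qed

section \<open>Bounded operators on weighted \<open>\<ell>\<^sub>2\<close> and their semigroups\<close>

locale positive_measure =
  fixes m :: "'x \<Rightarrow> real"
  assumes m_pos: "\<And>x. m x > 0"
begin

lemma mem_l2_UNIV: "f \<in> l2 UNIV m \<longleftrightarrow> (\<lambda>x. m x * (f x)\<^sup>2) summable_on UNIV"
  by (simp add: l2_def)

lemma m_nonzero [simp]: "m x \<noteq> 0" and sqrt_m_nonzero [simp]: "sqrt (m x) \<noteq> 0"
  using m_pos[of x] by simp_all

lemma weighted_sq_nonneg: "0 \<le> m x * (f x)\<^sup>2"
  using m_pos[of x] by simp

lemma sq_sqrt_m_mult: "(sqrt (m x) * r)\<^sup>2 = m x * r\<^sup>2"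
  using m_pos[of x] by (simp add: power_mult_distrib)

text \<open>A type cannot depend on \<open>m\<close>, so \<open>\<ell>\<^sub>2(X,m)\<close> is transported to the unweighted
  \<open>'x ell2\<close> by the unitary \<open>f \<mapsto> \<surd>m f\<close>.\<close>

definition to_ell2 :: "('x \<Rightarrow> real) \<Rightarrow> 'x ell2" where
  "to_ell2 f = Ell2 (\<lambda>x. sqrt (m x) * f x)"

definition of_ell2 :: "'x ell2 \<Rightarrow> ('x \<Rightarrow> real)" where
  "of_ell2 g = (\<lambda>x. ell2_fun g x / sqrt (m x))"

lemma ell2_fun_to_ell2: "f \<in> l2 UNIV m \<Longrightarrow> ell2_fun (to_ell2 f) = (\<lambda>x. sqrt (m x) * f x)"
  unfolding to_ell2_def by (rule Ell2_inverse) (simp add: mem_l2_UNIV sq_sqrt_m_mult)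

lemma of_ell2_in_l2: "of_ell2 g \<in> l2 UNIV m"
proof -
  have "sqrt (m x) * of_ell2 g x = ell2_fun g x" for x
    by (simp add: of_ell2_def)
  then show ?thesis
    using ell2_summable[of g] by (simp add: mem_l2_UNIV flip: sq_sqrt_m_mult)
qed

lemma of_ell2_to_ell2: "f \<in> l2 UNIV m \<Longrightarrow> of_ell2 (to_ell2 f) = f"
  by (auto simp: of_ell2_def ell2_fun_to_ell2)

lemma to_ell2_of_ell2: "to_ell2 (of_ell2 g) = g"
proof -
  have "(\<lambda>x. sqrt (m x) * of_ell2 g x) = ell2_fun g"
    by (auto simp: of_ell2_def)
  then show ?thesis
    by (simp add: to_ell2_def ell2_fun_inverse)
qed

lemma norm_to_ell2: "f \<in> l2 UNIV m \<Longrightarrow> norm (to_ell2 f) = l2norm UNIV m f"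
  by (simp add: norm_eq_sqrt_inner inner_ell2_eq ell2_fun_to_ell2 l2norm_def
      flip: power2_eq_square sq_sqrt_m_mult)

lemma inner_to_ell2:
  assumes "f \<in> l2 UNIV m" "g \<in> l2 UNIV m"
  shows "inner (to_ell2 f) (to_ell2 g) = (\<Sum>\<^sub>\<infinity>x. m x * f x * g x)"
proof -
  have eq: "sqrt (m x) * f x * (sqrt (m x) * g x) = m x * f x * g x" for x
    using m_pos[of x] by (simp add: algebra_simps)
  show ?thesis
    unfolding inner_ell2_eq ell2_fun_to_ell2[OF assms(1)] ell2_fun_to_ell2[OF assms(2)]
    by (rule infsum_cong) (rule eq)
qed

lemma summable_l2_mult:
  assumes "f \<in> l2 UNIV m" "g \<in> l2 UNIV m"
  shows "(\<lambda>x. m x * f x * g x) summable_on UNIV"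
proof -
  have "(\<lambda>x. (sqrt (m x) * f x) * (sqrt (m x) * g x)) summable_on UNIV"
    using assms by (intro sq_summable_mult) (simp_all add: mem_l2_UNIV sq_sqrt_m_mult)
  moreover have "(sqrt (m x) * f x) * (sqrt (m x) * g x) = m x * f x * g x" for x
    using m_pos[of x] by (simp add: algebra_simps)
  ultimately show ?thesis
    by simp
qed

lemma to_ell2_lincomb:
  assumes "f \<in> l2 UNIV m" "g \<in> l2 UNIV m"
  shows "(\<lambda>x. a * f x + g x) \<in> l2 UNIV m"
    and "to_ell2 (\<lambda>x. a * f x + g x) = a *\<^sub>R to_ell2 f + to_ell2 g"
proof -
  have "(\<lambda>x. (a * (sqrt (m x) * f x) + sqrt (m x) * g x)\<^sup>2) summable_on UNIV"
    using assms by (intro sq_summable_add sq_summable_scale)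
      (simp_all add: mem_l2_UNIV sq_sqrt_m_mult)
  moreover have "a * (sqrt (m x) * f x) + sqrt (m x) * g x = sqrt (m x) * (a * f x + g x)" for x
    by (simp add: algebra_simps)
  ultimately show l2: "(\<lambda>x. a * f x + g x) \<in> l2 UNIV m"
    by (simp add: mem_l2_UNIV sq_sqrt_m_mult)
  have "ell2_fun (to_ell2 (\<lambda>x. a * f x + g x)) = ell2_fun (a *\<^sub>R to_ell2 f + to_ell2 g)"
    unfolding ell2_fun_to_ell2[OF l2] plus_ell2.rep_eq scaleR_ell2.rep_eq
      ell2_fun_to_ell2[OF assms(1)] ell2_fun_to_ell2[OF assms(2)]
    by (simp add: algebra_simps)
  then show "to_ell2 (\<lambda>x. a * f x + g x) = a *\<^sub>R to_ell2 f + to_ell2 g"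
    by (simp add: ell2_fun_inject)
qed

lemma of_ell2_lincomb: "of_ell2 (a *\<^sub>R g + h) = (\<lambda>x. a * of_ell2 g x + of_ell2 h x)"
  by (auto simp: of_ell2_def ell2_fun_plus ell2_fun_scaleR add_divide_distrib)

lemma of_ell2_diff: "of_ell2 (g - h) = (\<lambda>x. of_ell2 g x - of_ell2 h x)"
  by (auto simp: of_ell2_def ell2_fun_minus diff_divide_distrib)

lemma of_ell2_divide: "of_ell2 (g /\<^sub>R t) = (\<lambda>x. of_ell2 g x / t)"
  by (auto simp: of_ell2_def ell2_fun_scaleR divide_inverse mult_ac)

lemma l2norm_of_ell2: "l2norm UNIV m (of_ell2 g) = norm g"
  using norm_to_ell2[OF of_ell2_in_l2] by (simp add: to_ell2_of_ell2)

lemma norm_to_ell2_sq: "f \<in> l2 UNIV m \<Longrightarrow> (norm (to_ell2 f))\<^sup>2 = (\<Sum>\<^sub>\<infinity>x. m x * (f x)\<^sup>2)"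
  unfolding power2_norm_eq_inner by (simp add: inner_to_ell2 power2_eq_square mult.assoc)

definition op_bop :: "(('x \<Rightarrow> real) \<Rightarrow> ('x \<Rightarrow> real)) \<Rightarrow> 'x ell2 bop" where
  "op_bop F = Bop (Blinfun (\<lambda>g. to_ell2 (F (of_ell2 g))))"

lemma bounded_linear_conj_ell2:
  assumes F: "bounded_linear_op UNIV UNIV m F"
  shows "bounded_linear (\<lambda>g. to_ell2 (F (of_ell2 g)))" (is "bounded_linear ?T")
proof -
  have F_l2: "\<And>f. f \<in> l2 UNIV m \<Longrightarrow> F f \<in> l2 UNIV m"
    and F_lin: "\<And>f g a. f \<in> l2 UNIV m \<Longrightarrow> g \<in> l2 UNIV m \<Longrightarrow>
      F (\<lambda>x. a * f x + g x) = (\<lambda>x. a * F f x + F g x)"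
    using F unfolding bounded_linear_op_def by blast+
  obtain K where K: "\<And>f. f \<in> l2 UNIV m \<Longrightarrow> l2norm UNIV m (F f) \<le> K * l2norm UNIV m f"
    using F unfolding bounded_linear_op_def by blast
  have lincomb: "?T (a *\<^sub>R g + h) = a *\<^sub>R ?T g + ?T h" for a g h
    by (simp add: of_ell2_lincomb of_ell2_in_l2 F_lin F_l2 to_ell2_lincomb)
  have zero: "?T 0 = 0"
    using lincomb[of 1 0 0] by simp
  show ?thesis
  proof (rule bounded_linear_intro[where K = K])
    show "?T (g + h) = ?T g + ?T h" for g h
      using lincomb[of 1 g h] by simp
    show "?T (r *\<^sub>R g) = r *\<^sub>R ?T g" for r g
      using lincomb[of r g 0] zero by simp
    show "norm (?T g) \<le> norm g * K" for g
      using K[OF of_ell2_in_l2]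
      by (simp add: norm_to_ell2 F_l2 of_ell2_in_l2 l2norm_of_ell2 mult.commute)
  qed
qed

lemma of_ell2_op_bop:
  assumes "bounded_linear_op UNIV UNIV m F" "f \<in> l2 UNIV m"
  shows "of_ell2 (bop_apply (op_bop F) (to_ell2 f)) = F f"
  using assms unfolding op_bop_def bounded_linear_op_def
  by (simp add: bop_apply_Bop[OF bounded_linear_conj_ell2[OF assms(1)]] of_ell2_to_ell2)

definition op_exp :: "(('x \<Rightarrow> real) \<Rightarrow> ('x \<Rightarrow> real)) \<Rightarrow> real \<Rightarrow> ('x \<Rightarrow> real) \<Rightarrow> ('x \<Rightarrow> real)" where
  "op_exp F t f = of_ell2 (bop_apply (exp (t *\<^sub>R op_bop F)) (to_ell2 f))"

lemma l2norm_op_exp: "l2norm UNIV m (op_exp F t f) = norm (bop_apply (exp (t *\<^sub>R op_bop F)) (to_ell2 f))"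
  by (simp add: op_exp_def l2norm_of_ell2)

lemma bounded_linear_op_op_exp: "bounded_linear_op UNIV UNIV m (op_exp F t)"
  unfolding bounded_linear_op_def
proof (intro conjI ballI allI exI[of _ "norm (exp (t *\<^sub>R op_bop F))"])
  fix f g :: "'x \<Rightarrow> real" and a :: real
  assume "f \<in> l2 UNIV m" "g \<in> l2 UNIV m"
  then show "op_exp F t (\<lambda>x. a * f x + g x) = (\<lambda>x. a * op_exp F t f x + op_exp F t g x)"
    by (simp add: op_exp_def to_ell2_lincomb bop_apply.scaleR_right bop_apply.add_right of_ell2_lincomb)
next
  fix f assume "f \<in> l2 UNIV m"
  then show "l2norm UNIV m (op_exp F t f) \<le> norm (exp (t *\<^sub>R op_bop F)) * l2norm UNIV m f"
    by (simp add: l2norm_op_exp norm_bop_apply_le flip: norm_to_ell2)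
qed (simp add: op_exp_def of_ell2_in_l2)

lemma op_exp_0: "f \<in> l2 UNIV m \<Longrightarrow> op_exp F 0 f = f"
  by (simp add: op_exp_def bop_apply_one of_ell2_to_ell2)

lemma op_exp_add: "op_exp F (t + s) f = op_exp F t (op_exp F s f)"
  by (simp add: op_exp_def exp_scaleR_add bop_apply_mult to_ell2_of_ell2)

lemma op_exp_strongly_continuous:
  assumes "f \<in> l2 UNIV m"
  shows "((\<lambda>t. l2norm UNIV m (\<lambda>x. op_exp F t f x - f x)) \<longlongrightarrow> 0) (at_right 0)"
proof -
  have "(\<lambda>x. op_exp F t f x - f x) = of_ell2 (bop_apply (exp (t *\<^sub>R op_bop F)) (to_ell2 f) - to_ell2 f)"
    for t
    by (simp add: op_exp_def of_ell2_diff of_ell2_to_ell2 assms)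
  then show ?thesis
    using bop_exp_strongly_continuous[of "op_bop F" "to_ell2 f"] by (simp add: l2norm_of_ell2)
qed

lemma op_exp_generator:
  assumes "bounded_linear_op UNIV UNIV m F" "f \<in> l2 UNIV m"
  shows "((\<lambda>t. l2norm UNIV m (\<lambda>x. (op_exp F t f x - f x) / t - F f x)) \<longlongrightarrow> 0) (at_right 0)"
proof -
  have "(\<lambda>x. (op_exp F t f x - f x) / t - F f x) = of_ell2
      ((bop_apply (exp (t *\<^sub>R op_bop F)) (to_ell2 f) - to_ell2 f) /\<^sub>R t - bop_apply (op_bop F) (to_ell2 f))"
    for t
    by (simp add: op_exp_def of_ell2_diff of_ell2_divide of_ell2_to_ell2 of_ell2_op_bop assms)
  then show ?thesis
    using bop_exp_difference_quotient[of "op_bop F" "to_ell2 f"] by (simp add: l2norm_of_ell2)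
qed

theorem generates_op_exp:
  assumes "bounded_linear_op UNIV UNIV m F"
  shows "generates m F (op_exp F)"
  unfolding generates_def C0_semigroup_def
  using assms by (simp add: bounded_linear_op_op_exp op_exp_0 op_exp_add
      op_exp_strongly_continuous op_exp_generator)

lemma op_exp_decay:
  assumes F: "bounded_linear_op UNIV UNIV m F"
    and dissipative: "\<And>f. f \<in> l2 UNIV m \<Longrightarrow>
      (\<Sum>\<^sub>\<infinity>x. m x * F f x * f x) \<le> - \<delta> * (\<Sum>\<^sub>\<infinity>x. m x * (f x)\<^sup>2)"
    and "t \<ge> 0" "f \<in> l2 UNIV m"
  shows "l2norm UNIV m (op_exp F t f) \<le> exp (- \<delta> * t) * l2norm UNIV m f"
proof -
  have "inner (bop_apply (op_bop F) g) g \<le> - \<delta> * (norm g)\<^sup>2" for g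
  proof -
    define h where "h = of_ell2 g"
    have h: "h \<in> l2 UNIV m" and g: "g = to_ell2 h"
      by (simp_all add: h_def of_ell2_in_l2 to_ell2_of_ell2)
    have "F h \<in> l2 UNIV m"
      using F h unfolding bounded_linear_op_def by blast
    have "inner (bop_apply (op_bop F) g) g = inner (to_ell2 (F h)) (to_ell2 h)"
      unfolding op_bop_def bop_apply_Bop[OF bounded_linear_conj_ell2[OF F]] g
      by (simp add: of_ell2_to_ell2 h)
    also have "\<dots> = (\<Sum>\<^sub>\<infinity>x. m x * F h x * h x)"
      by (rule inner_to_ell2[OF \<open>F h \<in> l2 UNIV m\<close> h])
    also have "\<dots> \<le> - \<delta> * (\<Sum>\<^sub>\<infinity>x. m x * (h x)\<^sup>2)"
      by (rule dissipative[OF h])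
    also have "\<dots> = - \<delta> * (norm g)\<^sup>2"
      by (simp add: g norm_to_ell2_sq h)
    finally show ?thesis .
  qed
  from bop_exp_decay[OF this \<open>t \<ge> 0\<close>] show ?thesis
    by (simp add: l2norm_op_exp flip: norm_to_ell2[OF \<open>f \<in> l2 UNIV m\<close>])
qed

lemma bounded_linear_op_lincomb:
  assumes F: "bounded_linear_op UNIV UNIV m F" and G: "bounded_linear_op UNIV UNIV m G"
  shows "bounded_linear_op UNIV UNIV m (\<lambda>f x. a * F f x + G f x)"
proof -
  have F_l2: "\<And>f. f \<in> l2 UNIV m \<Longrightarrow> F f \<in> l2 UNIV m"
    and G_l2: "\<And>f. f \<in> l2 UNIV m \<Longrightarrow> G f \<in> l2 UNIV m"
    and F_lin: "\<And>f g c. f \<in> l2 UNIV m \<Longrightarrow> g \<in> l2 UNIV m \<Longrightarrow>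
      F (\<lambda>x. c * f x + g x) = (\<lambda>x. c * F f x + F g x)"
    and G_lin: "\<And>f g c. f \<in> l2 UNIV m \<Longrightarrow> g \<in> l2 UNIV m \<Longrightarrow>
      G (\<lambda>x. c * f x + g x) = (\<lambda>x. c * G f x + G g x)"
    using F G unfolding bounded_linear_op_def by blast+
  obtain K1 K2 where
    K1: "\<And>f. f \<in> l2 UNIV m \<Longrightarrow> l2norm UNIV m (F f) \<le> K1 * l2norm UNIV m f" and
    K2: "\<And>f. f \<in> l2 UNIV m \<Longrightarrow> l2norm UNIV m (G f) \<le> K2 * l2norm UNIV m f"
    using F G unfolding bounded_linear_op_def by metis
  show ?thesis
    unfolding bounded_linear_op_def
  proof (intro conjI ballI allI exI[of _ "\<bar>a\<bar> * K1 + K2"])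
    fix f assume f: "f \<in> l2 UNIV m"
    then show "(\<lambda>x. a * F f x + G f x) \<in> l2 UNIV m"
      by (intro to_ell2_lincomb(1) F_l2 G_l2)
    have "l2norm UNIV m (\<lambda>x. a * F f x + G f x) = norm (a *\<^sub>R to_ell2 (F f) + to_ell2 (G f))"
      by (simp add: to_ell2_lincomb norm_to_ell2 F_l2 G_l2 f flip: to_ell2_lincomb(2))
    also have "\<dots> \<le> \<bar>a\<bar> * l2norm UNIV m (F f) + l2norm UNIV m (G f)"
      using norm_triangle_ineq[of "a *\<^sub>R to_ell2 (F f)" "to_ell2 (G f)"]
      by (simp add: norm_to_ell2 F_l2 G_l2 f)
    also have "\<dots> \<le> (\<bar>a\<bar> * K1 + K2) * l2norm UNIV m f"
      using mult_left_mono[OF K1[OF f], of "\<bar>a\<bar>"] K2[OF f] by (simp add: algebra_simps)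
    finally show "l2norm UNIV m (\<lambda>x. a * F f x + G f x) \<le> (\<bar>a\<bar> * K1 + K2) * l2norm UNIV m f" .
  next
    fix f g c assume fg: "f \<in> l2 UNIV m" "g \<in> l2 UNIV m"
    show "(\<lambda>x. a * F (\<lambda>x. c * f x + g x) x + G (\<lambda>x. c * f x + g x) x)
        = (\<lambda>x. c * (a * F f x + G f x) + (a * F g x + G g x))"
      unfolding F_lin[OF fg] G_lin[OF fg] by (simp add: algebra_simps)
  qed
qed

end

section \<open>The weighted graph Laplacian\<close>

locale bounded_wgraph = positive_measure m for m :: "'x \<Rightarrow> real" +
  fixes b :: "'x \<Rightarrow> 'x \<Rightarrow> real" and C :: real
  assumes b_sym: "\<And>x y. b x y = b y x" and b_nonneg: "\<And>x y. 0 \<le> b x y"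
    and b_summable: "\<And>x. b x summable_on UNIV"
    and degree_le: "\<And>x. (\<Sum>\<^sub>\<infinity>y. b x y) \<le> C * m x"
    and C_pos: "C > 0"
begin

definition deg :: "'x \<Rightarrow> real" where
  "deg x = (\<Sum>\<^sub>\<infinity>y. b x y)"

definition edge_energy :: "('x \<Rightarrow> real) \<Rightarrow> 'x \<Rightarrow> 'x \<Rightarrow> real" where
  "edge_energy f x y = b x y * (f x - f y)\<^sup>2"

definition energy :: "('x \<Rightarrow> real) \<Rightarrow> real" where
  "energy f = (\<Sum>\<^sub>\<infinity>(x, y)\<in>UNIV. edge_energy f x y)"

lemma b_le_deg: "b x y \<le> deg x"
  unfolding deg_def using finite_sum_le_infsum[OF b_summable[of x], of "{y}"] b_nonneg by simp

lemma deg_le: "deg x \<le> C * m x"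
  unfolding deg_def by (rule degree_le)

lemma deg_nonneg: "0 \<le> deg x"
  unfolding deg_def by (rule infsum_nonneg) (simp add: b_nonneg)

lemma b_le: "b x y \<le> C * m y"
  using b_le_deg[of y x] deg_le[of y] b_sym[of x y] by simp

lemma summable_b_sq:
  assumes "f \<in> l2 UNIV m"
  shows "(\<lambda>y. b x y * (f y)\<^sup>2) summable_on UNIV"
proof (rule summable_on_comparison_test)
  show "(\<lambda>y. C * (m y * (f y)\<^sup>2)) summable_on UNIV"
    using assms unfolding mem_l2_UNIV by (rule summable_on_cmult_right)
  show "b x y * (f y)\<^sup>2 \<le> C * (m y * (f y)\<^sup>2)" for y
    using mult_right_mono[OF b_le[of x y], of "(f y)\<^sup>2"] by (simp add: mult.assoc)
qed (simp add: b_nonneg)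

lemma summable_b_mult:
  assumes "f \<in> l2 UNIV m"
  shows "(\<lambda>y. b x y * f y) summable_on UNIV"
proof -
  have "(\<lambda>y. sqrt (b x y) * (sqrt (b x y) * f y)) summable_on UNIV"
    using b_summable[of x] summable_b_sq[OF assms, of x] b_nonneg[of x]
    by (intro sq_summable_mult) (simp_all add: power_mult_distrib)
  then show ?thesis
    using b_nonneg[of x] by (simp flip: mult.assoc)
qed

lemma summable_b_diff:
  assumes "f \<in> l2 UNIV m"
  shows "(\<lambda>y. b x y * (f x - f y)) summable_on UNIV"
  using summable_on_diff[OF summable_on_cmult_left[OF b_summable] summable_b_mult[OF assms]]
  by (simp add: right_diff_distrib)

lemma edge_energy_nonneg: "0 \<le> edge_energy f x y"
  unfolding edge_energy_def by (simp add: b_nonneg)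

lemma edge_energy_le: "edge_energy f x y \<le> 2 * (b x y * (f x)\<^sup>2) + 2 * (b x y * (f y)\<^sup>2)"
proof -
  have "(f x - f y)\<^sup>2 \<le> 2 * (f x)\<^sup>2 + 2 * (f y)\<^sup>2"
    using sum_squares_bound[of "f x" "- f y"] by (simp add: power2_diff)
  from mult_left_mono[OF this b_nonneg] show ?thesis
    unfolding edge_energy_def by (simp add: algebra_simps)
qed

lemma summable_deg_sq:
  assumes "f \<in> l2 UNIV m"
  shows "(\<lambda>x. deg x * (f x)\<^sup>2) summable_on UNIV"
proof (rule summable_on_comparison_test)
  show "(\<lambda>x. C * (m x * (f x)\<^sup>2)) summable_on UNIV"
    using assms unfolding mem_l2_UNIV by (rule summable_on_cmult_right)
  show "deg x * (f x)\<^sup>2 \<le> C * (m x * (f x)\<^sup>2)" for x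
    using mult_right_mono[OF deg_le[of x], of "(f x)\<^sup>2"] by (simp add: mult.assoc)
qed (simp add: deg_nonneg)

lemma has_sum_edge_sq_left:
  assumes "f \<in> l2 UNIV m"
  shows "((\<lambda>(x, y). b x y * (f x)\<^sup>2) has_sum (\<Sum>\<^sub>\<infinity>x. deg x * (f x)\<^sup>2)) UNIV"
proof -
  have rows: "((\<lambda>y. case (x, y) of (x, y) \<Rightarrow> b x y * (f x)\<^sup>2) has_sum deg x * (f x)\<^sup>2) UNIV" for x
    unfolding deg_def by (simp add: has_sum_cmult_left[OF has_sum_infsum[OF b_summable]])
  have total: "((\<lambda>x. deg x * (f x)\<^sup>2) has_sum (\<Sum>\<^sub>\<infinity>x. deg x * (f x)\<^sup>2)) UNIV"
    by (rule has_sum_infsum[OF summable_deg_sq[OF assms]])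
  have "(\<lambda>(x, y). b x y * (f x)\<^sup>2) summable_on UNIV \<times> UNIV"
    by (rule summable_on_SigmaI[OF rows has_sum_imp_summable[OF total]]) (simp add: b_nonneg)
  from has_sum_SigmaI[OF rows total this] show ?thesis
    by simp
qed

lemma has_sum_edge_sq_right:
  assumes "f \<in> l2 UNIV m"
  shows "((\<lambda>(x, y). b x y * (f y)\<^sup>2) has_sum (\<Sum>\<^sub>\<infinity>x. deg x * (f x)\<^sup>2)) UNIV"
proof -
  have "((\<lambda>(x, y). b y x * (f y)\<^sup>2) has_sum (\<Sum>\<^sub>\<infinity>x. deg x * (f x)\<^sup>2)) (UNIV \<times> UNIV)"
    using has_sum_edge_sq_left[OF assms] by (subst has_sum_swap) (simp add: case_prod_unfold)
  then show ?thesis by (simp add: b_sym[of _ "_ :: 'x"])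
qed

lemma summable_edge_energy:
  assumes "f \<in> l2 UNIV m"
  shows "(\<lambda>(x, y). edge_energy f x y) summable_on UNIV"
proof (rule summable_on_comparison_test)
  show "(\<lambda>p. 2 * (case p of (x, y) \<Rightarrow> b x y * (f x)\<^sup>2) + 2 * (case p of (x, y) \<Rightarrow> b x y * (f y)\<^sup>2))
      summable_on UNIV"
    using has_sum_edge_sq_left[OF assms] has_sum_edge_sq_right[OF assms]
    by (intro summable_on_add summable_on_cmult_right) (auto dest: has_sum_imp_summable)
qed (auto simp: edge_energy_le edge_energy_nonneg)

lemma energy_nonneg: "0 \<le> energy f"
  unfolding energy_def by (rule infsum_nonneg) (auto simp: edge_energy_nonneg)

lemma energy_le:
  assumes f: "f \<in> l2 UNIV m"
  shows "energy f \<le> 4 * C * (\<Sum>\<^sub>\<infinity>x. m x * (f x)\<^sup>2)"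
proof -
  let ?S = "\<Sum>\<^sub>\<infinity>x. deg x * (f x)\<^sup>2"
  have "((\<lambda>p. 2 * (case p of (x, y) \<Rightarrow> b x y * (f x)\<^sup>2) + 2 * (case p of (x, y) \<Rightarrow> b x y * (f y)\<^sup>2))
      has_sum (2 * ?S + 2 * ?S)) UNIV"
    by (intro has_sum_add has_sum_cmult_right has_sum_edge_sq_left has_sum_edge_sq_right f)
  then have "energy f \<le> 4 * ?S"
    unfolding energy_def
    by (intro has_sum_mono[OF has_sum_infsum[OF summable_edge_energy[OF f]]])
      (auto simp: edge_energy_le)
  also have "?S \<le> (\<Sum>\<^sub>\<infinity>x. C * (m x * (f x)\<^sup>2))"
  proof (rule infsum_mono[OF summable_deg_sq[OF f]])
    show "(\<lambda>x. C * (m x * (f x)\<^sup>2)) summable_on UNIV"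
      using f unfolding mem_l2_UNIV by (rule summable_on_cmult_right)
    show "deg x * (f x)\<^sup>2 \<le> C * (m x * (f x)\<^sup>2)" for x
      using mult_right_mono[OF deg_le[of x], of "(f x)\<^sup>2"] by (simp add: mult.assoc)
  qed
  also have "\<dots> = C * (\<Sum>\<^sub>\<infinity>x. m x * (f x)\<^sup>2)"
    using f unfolding mem_l2_UNIV by (rule infsum_cmult_right)
  finally show ?thesis by simp
qed

lemma summable_edge_energy_row:
  assumes "f \<in> l2 UNIV m"
  shows "(\<lambda>y. edge_energy f x y) summable_on UNIV"
proof (rule summable_on_comparison_test)
  show "(\<lambda>y. 2 * (b x y * (f x)\<^sup>2) + 2 * (b x y * (f y)\<^sup>2)) summable_on UNIV"
    by (intro summable_on_add summable_on_cmult_right summable_on_cmult_left b_summable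
        summable_b_sq assms)
qed (auto simp: edge_energy_le edge_energy_nonneg)

lemma laplacian_sq_le:
  assumes "f \<in> l2 UNIV m"
  shows "m x * (laplacian b m f x)\<^sup>2 \<le> C * (\<Sum>\<^sub>\<infinity>y. edge_energy f x y)"
proof -
  note row_summable = summable_edge_energy_row[OF assms, of x, unfolded edge_energy_def]
  have "(m x * laplacian b m f x)\<^sup>2 \<le> deg x * (\<Sum>\<^sub>\<infinity>y. edge_energy f x y)"
    unfolding laplacian_def deg_def edge_energy_def
    using infsum_weighted_Cauchy_Schwarz[OF b_nonneg b_summable row_summable] by simp
  also have "\<dots> \<le> C * m x * (\<Sum>\<^sub>\<infinity>y. edge_energy f x y)"
    by (intro mult_right_mono deg_le infsum_nonneg edge_energy_nonneg)
  finally show ?thesis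
    using m_pos[of x] by (simp add: power2_eq_square algebra_simps)
qed

lemma has_sum_row_energy:
  assumes "f \<in> l2 UNIV m"
  shows "((\<lambda>x. \<Sum>\<^sub>\<infinity>y. edge_energy f x y) has_sum energy f) UNIV"
proof -
  have "((\<lambda>(x, y). edge_energy f x y) has_sum energy f) (UNIV \<times> UNIV)"
    using has_sum_infsum[OF summable_edge_energy[OF assms]] by (simp add: energy_def)
  then show ?thesis
    by (rule has_sum_SigmaD) (simp add: has_sum_infsum summable_edge_energy_row assms)
qed

lemma laplacian_in_l2:
  assumes "f \<in> l2 UNIV m"
  shows "laplacian b m f \<in> l2 UNIV m"
    and "(\<Sum>\<^sub>\<infinity>x. m x * (laplacian b m f x)\<^sup>2) \<le> C * energy f"
proof -
  have bound: "((\<lambda>x. C * (\<Sum>\<^sub>\<infinity>y. edge_energy f x y)) has_sum C * energy f) UNIV"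
    by (rule has_sum_cmult_right[OF has_sum_row_energy[OF assms]])
  show l2: "laplacian b m f \<in> l2 UNIV m"
    unfolding mem_l2_UNIV
    by (rule summable_on_comparison_test[OF has_sum_imp_summable[OF bound]])
      (simp_all add: laplacian_sq_le[OF assms] weighted_sq_nonneg)
  show "(\<Sum>\<^sub>\<infinity>x. m x * (laplacian b m f x)\<^sup>2) \<le> C * energy f"
    using l2 unfolding mem_l2_UNIV
    by (intro has_sum_mono[OF has_sum_infsum bound]) (simp_all add: laplacian_sq_le[OF assms])
qed

lemma laplacian_lincomb:
  assumes "f \<in> l2 UNIV m" "g \<in> l2 UNIV m"
  shows "laplacian b m (\<lambda>x. a * f x + g x) = (\<lambda>x. a * laplacian b m f x + laplacian b m g x)"
proof
  fix x
  have "(\<Sum>\<^sub>\<infinity>y. b x y * ((a * f x + g x) - (a * f y + g y)))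
      = (\<Sum>\<^sub>\<infinity>y. a * (b x y * (f x - f y)) + b x y * (g x - g y))"
    by (simp add: algebra_simps)
  also have "\<dots> = a * (\<Sum>\<^sub>\<infinity>y. b x y * (f x - f y)) + (\<Sum>\<^sub>\<infinity>y. b x y * (g x - g y))"
    using summable_b_diff[OF assms(1)] summable_b_diff[OF assms(2)]
    by (simp add: infsum_add summable_on_cmult_right infsum_cmult_right)
  finally show "laplacian b m (\<lambda>x. a * f x + g x) x = a * laplacian b m f x + laplacian b m g x"
    unfolding laplacian_def by (simp add: algebra_simps)
qed

lemma bounded_linear_op_laplacian: "bounded_linear_op UNIV UNIV m (laplacian b m)"
  unfolding bounded_linear_op_def
proof (intro conjI ballI allI exI[of _ "2 * C"])
  fix f assume f: "f \<in> l2 UNIV m"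
  then show "laplacian b m f \<in> l2 UNIV m"
    by (rule laplacian_in_l2)
  have "(\<Sum>\<^sub>\<infinity>x. m x * (laplacian b m f x)\<^sup>2) \<le> C * (4 * C * (\<Sum>\<^sub>\<infinity>x. m x * (f x)\<^sup>2))"
    using laplacian_in_l2(2)[OF f] mult_left_mono[OF energy_le[OF f], of C] C_pos by linarith
  also have "\<dots> = (2 * C)\<^sup>2 * (\<Sum>\<^sub>\<infinity>x. m x * (f x)\<^sup>2)"
    by (simp add: power2_eq_square)
  finally have "sqrt (\<Sum>\<^sub>\<infinity>x. m x * (laplacian b m f x)\<^sup>2)
      \<le> sqrt ((2 * C)\<^sup>2 * (\<Sum>\<^sub>\<infinity>x. m x * (f x)\<^sup>2))"
    by (rule real_sqrt_le_mono)
  also have "\<dots> = 2 * C * sqrt (\<Sum>\<^sub>\<infinity>x. m x * (f x)\<^sup>2)"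
    using C_pos by (simp add: real_sqrt_mult)
  finally show "l2norm UNIV m (laplacian b m f) \<le> 2 * C * l2norm UNIV m f"
    unfolding l2norm_def .
qed (simp add: laplacian_lincomb)

lemma summable_green_integrand:
  assumes f: "f \<in> l2 UNIV m"
  shows "(\<lambda>(x, y). b x y * (f x - f y) * f x) summable_on UNIV"
proof -
  define R where "R = (\<lambda>(x, y). b x y * (f x - f y) * f x)"
  have R_le: "\<bar>R (x, y)\<bar> \<le> 2 * (b x y * (f x)\<^sup>2) + b x y * (f y)\<^sup>2" for x y
  proof -
    have "\<bar>(f x - f y) * f x\<bar> \<le> (f x)\<^sup>2 + \<bar>f x * f y\<bar>"
      by (simp add: left_diff_distrib power2_eq_square abs_triangle_ineq4[THEN order_trans] abs_mult)
    moreover have "2 * \<bar>f x * f y\<bar> \<le> (f x)\<^sup>2 + (f y)\<^sup>2"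
      using sum_squares_bound[of "\<bar>f x\<bar>" "\<bar>f y\<bar>"] by (simp add: abs_mult)
    ultimately have le: "\<bar>(f x - f y) * f x\<bar> \<le> 2 * (f x)\<^sup>2 + (f y)\<^sup>2"
      by simp
    have "\<bar>R (x, y)\<bar> = b x y * \<bar>(f x - f y) * f x\<bar>"
      by (simp add: R_def abs_mult abs_of_nonneg[OF b_nonneg] mult.assoc)
    also have "\<dots> \<le> b x y * (2 * (f x)\<^sup>2 + (f y)\<^sup>2)"
      by (rule mult_left_mono[OF le b_nonneg])
    finally show ?thesis
      by (simp add: algebra_simps)
  qed
  have "(\<lambda>p. \<bar>R p\<bar>) summable_on UNIV"
  proof (rule summable_on_comparison_test)
    show "(\<lambda>p. 2 * (case p of (x, y) \<Rightarrow> b x y * (f x)\<^sup>2) + (case p of (x, y) \<Rightarrow> b x y * (f y)\<^sup>2))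
        summable_on UNIV"
      using has_sum_edge_sq_left[OF f] has_sum_edge_sq_right[OF f]
      by (intro summable_on_add summable_on_cmult_right) (auto dest: has_sum_imp_summable)
  qed (auto simp: R_le)
  then show ?thesis
    using summable_on_iff_abs_summable_on_real[of R UNIV] by (simp add: R_def)
qed

lemma green_formula:
  assumes f: "f \<in> l2 UNIV m"
  shows "(\<Sum>\<^sub>\<infinity>x. m x * laplacian b m f x * f x) = energy f / 2"
proof -
  define R where "R = (\<lambda>(x, y). b x y * (f x - f y) * f x)"
  have R_summable: "R summable_on UNIV"
    unfolding R_def by (rule summable_green_integrand[OF f])
  have "(\<Sum>\<^sub>\<infinity>x. m x * laplacian b m f x * f x) = (\<Sum>\<^sub>\<infinity>x. \<Sum>\<^sub>\<infinity>y. R (x, y))"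
    using summable_b_diff[OF f]
    by (intro infsum_cong) (simp add: R_def laplacian_def infsum_cmult_left)
  also have "\<dots> = infsum R UNIV"
    using infsum_Sigma_banach[of R UNIV "\<lambda>_. UNIV"] R_summable by simp
  finally have lhs: "(\<Sum>\<^sub>\<infinity>x. m x * laplacian b m f x * f x) = infsum R UNIV" .
  text \<open>Swapping the roles of \<open>x\<close> and \<open>y\<close> and adding symmetrizes \<open>R\<close> into the edge energy.\<close>
  have "((\<lambda>(x, y). R (y, x)) has_sum infsum R UNIV) (UNIV \<times> UNIV)"
    using has_sum_infsum[OF R_summable] by (subst has_sum_swap) simp
  from has_sum_add[OF has_sum_infsum[OF R_summable] this[simplified]]
  have "((\<lambda>(x, y). edge_energy f x y) has_sum 2 * infsum R UNIV) UNIV"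
    by (simp add: R_def edge_energy_def b_sym[of _ "_ :: 'x"] power2_eq_square algebra_simps
        case_prod_unfold)
  then show ?thesis
    using lhs by (simp add: energy_def infsumI)
qed

end

section \<open>Observability from a relatively dense set\<close>

fun reach :: "('x \<Rightarrow> 'x set) \<Rightarrow> nat \<Rightarrow> 'x \<Rightarrow> 'x set" where
  "reach h 0 u = {u}"
| "reach h (Suc n) u = reach h n u \<union> (\<Union>v\<in>reach h n u. h v)"

lemma reach_mono: "n \<le> n' \<Longrightarrow> reach h n u \<subseteq> reach h n' u"
  by (rule lift_Suc_mono_le[of "\<lambda>n. reach h n u"]) auto

lemma reach_card:
  assumes "\<And>v. finite (h v)" "\<And>v. card (h v) \<le> K"
  shows "finite (reach h n u) \<and> card (reach h n u) \<le> (K + 1) ^ n"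
proof (induction n)
  case (Suc n)
  then have fin: "finite (reach h n u)" and card: "card (reach h n u) \<le> (K + 1) ^ n"
    by auto
  have "card (reach h (Suc n) u) \<le> card (reach h n u) + card (\<Union>v\<in>reach h n u. h v)"
    by (simp add: card_Un_le)
  also have "card (\<Union>v\<in>reach h n u. h v) \<le> (\<Sum>v\<in>reach h n u. card (h v))"
    by (rule card_UN_le[OF fin])
  also have "\<dots> \<le> card (reach h n u) * K"
    using sum_mono[of "reach h n u" "\<lambda>v. card (h v)" "\<lambda>_. K"] assms(2) by simp
  finally have "card (reach h (Suc n) u) \<le> card (reach h n u) * (K + 1)"
    by simp
  also have "\<dots> \<le> (K + 1) ^ n * (K + 1)"
    using card by (rule mult_right_mono) simp
  finally show ?case
    using fin assms(1) by (simp add: mult.commute)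
qed simp

lemma path_reach:
  assumes edges: "\<And>j. Suc j < length p \<Longrightarrow> p ! Suc j \<in> h (p ! j)"
  shows "i \<le> k \<Longrightarrow> k < length p \<Longrightarrow> p ! k \<in> reach h (k - i) (p ! i)"
proof (induction k)
  case (Suc k)
  show ?case
  proof (cases "i = Suc k")
    case False
    then have "i \<le> k"
      using Suc.prems by simp
    then have "p ! Suc k \<in> reach h (Suc (k - i)) (p ! i)"
      using Suc edges[of k] by auto
    then show ?thesis
      using \<open>i \<le> k\<close> by (simp add: Suc_diff_le)
  qed simp
qed simp

lemma sum_fiber_le:
  fixes g :: "'b \<Rightarrow> real"
  assumes "finite W" "\<And>w. w \<in> W \<Longrightarrow> 0 \<le> g (h w)"
    and "\<And>e. e \<in> h ` W \<Longrightarrow> card {w\<in>W. h w = e} \<le> K"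
  shows "(\<Sum>w\<in>W. g (h w)) \<le> K * (\<Sum>e\<in>h ` W. g e)"
proof -
  have "(\<Sum>w\<in>W. g (h w)) = (\<Sum>e\<in>h ` W. real (card {w\<in>W. h w = e}) * g e)"
    using sum.image_gen[OF assms(1), of "\<lambda>w. g (h w)" h] by simp
  also have "\<dots> \<le> (\<Sum>e\<in>h ` W. real K * g e)"
    using assms(2,3) by (intro sum_mono mult_right_mono) auto
  finally show ?thesis
    by (simp add: sum_distrib_left)
qed

locale dense_wgraph = bounded_wgraph m b C for m :: "'x \<Rightarrow> real" and b C +
  fixes D :: "'x set" and L :: real and M :: real
  assumes L_pos: "L > 0" and m_le: "\<And>x. m x \<le> M"
    and short_paths: "\<And>y. y \<notin> D \<Longrightarrow> \<exists>x\<in>D. \<exists>p. graph_path b p x y \<and> path_length b p \<le> L"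
begin

text \<open>Every edge of a path of length at most \<open>L\<close> is heavy (weight at least \<open>1/L\<close>), and
  by (B) and (M) there are at most \<open>max_len\<close> edges on it and heavy edges at each vertex.\<close>

definition max_len :: nat where
  "max_len = nat \<lceil>C * M * L\<rceil>"

definition heavy :: "'x \<Rightarrow> 'x set" where
  "heavy u = {v. 1 / L \<le> b u v}"

definition ball_size :: nat where
  "ball_size = (max_len + 1) ^ max_len"

lemma M_pos: "M > 0"
  using m_pos[of undefined] m_le[of undefined] by simp

lemma max_len_ge: "C * M * L \<le> real max_len"
  unfolding max_len_def by linarith

lemma b_le_CM: "b u v \<le> C * M"
  using b_le_deg[of u v] deg_le[of u] m_le[of u] C_pos by (smt (verit) mult_left_mono)

lemma card_heavy_subset_le:
  assumes "finite F" "F \<subseteq> heavy u"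
  shows "card F \<le> max_len"
proof -
  have "real (card F) / L = (\<Sum>v\<in>F. 1 / L)"
    by simp
  also have "\<dots> \<le> (\<Sum>v\<in>F. b u v)"
    using assms(2) by (intro sum_mono) (auto simp: heavy_def)
  also have "\<dots> \<le> deg u"
    unfolding deg_def by (rule finite_sum_le_infsum[OF b_summable assms(1)]) (auto simp: b_nonneg)
  also have "\<dots> \<le> C * M"
    using deg_le[of u] m_le[of u] C_pos by (smt (verit) mult_left_mono)
  finally have "real (card F) \<le> C * M * L"
    using L_pos by (simp add: field_simps)
  then show ?thesis
    using max_len_ge by linarith
qed

lemma finite_heavy: "finite (heavy u)"
proof (rule ccontr)
  assume "infinite (heavy u)"
  then obtain F where "finite F" "card F = Suc max_len" "F \<subseteq> heavy u"
    using infinite_arbitrarily_large by blast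
  then show False
    using card_heavy_subset_le by fastforce
qed

lemma heavy_reach: "finite (reach heavy max_len u) \<and> card (reach heavy max_len u) \<le> ball_size"
  unfolding ball_size_def
  by (rule reach_card[OF finite_heavy card_heavy_subset_le[OF finite_heavy subset_refl]])

lemma graph_path_ends:
  assumes "graph_path b p x y"
  shows "p ! 0 = x" "p ! (length p - 1) = y"
  using assms unfolding graph_path_def by (auto simp: hd_conv_nth last_conv_nth)

lemma short_path_edge_heavy:
  assumes "graph_path b p x y" "path_length b p \<le> L" "j < length p - 1"
  shows "1 / L \<le> b (p ! j) (p ! Suc j)"
proof -
  have pos: "b (p ! i) (p ! Suc i) > 0" if "i < length p - 1" for i
    using assms(1) that unfolding graph_path_def by auto
  have "1 / b (p ! j) (p ! Suc j) \<le> path_length b p"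
    unfolding path_length_def using assms(3) pos
    by (intro member_le_sum) (auto simp: less_imp_le)
  with assms(2) have "1 / b (p ! j) (p ! Suc j) \<le> L"
    by simp
  then show ?thesis
    using pos[OF assms(3)] L_pos by (simp add: field_simps)
qed

lemma short_path_length_le:
  assumes "graph_path b p x y" "path_length b p \<le> L"
  shows "length p - 1 \<le> max_len"
proof -
  have "1 / (C * M) \<le> 1 / b (p ! j) (p ! Suc j)" if "j < length p - 1" for j
    using assms(1) that b_le_CM[of "p ! j" "p ! Suc j"] unfolding graph_path_def
    by (auto intro: frac_le)
  then have "(\<Sum>j<length p - 1. 1 / (C * M)) \<le> path_length b p"
    unfolding path_length_def by (intro sum_mono) auto
  with assms(2) have "real (length p - 1) / (C * M) \<le> L"
    by simp
  then have "real (length p - 1) \<le> C * M * L"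
    using C_pos M_pos by (simp add: field_simps)
  then show ?thesis
    using max_len_ge by linarith
qed

lemma short_path_reach:
  assumes "graph_path b p x y" "path_length b p \<le> L" "j < length p"
  shows "y \<in> reach heavy max_len (p ! j)"
proof -
  have "p ! (length p - 1) \<in> reach heavy (length p - 1 - j) (p ! j)"
    using short_path_edge_heavy[OF assms(1,2)] assms(3)
    by (intro path_reach) (auto simp: heavy_def)
  moreover have "reach heavy (length p - 1 - j) (p ! j) \<subseteq> reach heavy max_len (p ! j)"
    using short_path_length_le[OF assms(1,2)] by (intro reach_mono) simp
  ultimately show ?thesis
    using graph_path_ends(2)[OF assms(1)] by auto
qed

text \<open>Telescoping along the path and Cauchy--Schwarz over its at most \<open>max_len\<close> heavy edges.\<close>

lemma sq_diff_le_path_energy: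
  assumes "graph_path b p x y" "path_length b p \<le> L"
  shows "(f y - f x)\<^sup>2 \<le> L * max_len * (\<Sum>j<length p - 1. edge_energy f (p ! j) (p ! Suc j))"
proof -
  define n where "n = length p - 1"
  define d where "d j = f (p ! Suc j) - f (p ! j)" for j
  have "f y - f x = (\<Sum>j<n. d j)"
    using sum_lessThan_telescope[of "\<lambda>j. f (p ! j)" n] graph_path_ends[OF assms(1)]
    by (simp add: d_def n_def)
  then have "(f y - f x)\<^sup>2 \<le> real n * (\<Sum>j<n. (d j)\<^sup>2)"
    using sum_squared_le_sum_of_squares[of d "{..<n}"] by (simp add: mult.commute)
  also have "\<dots> \<le> real n * (\<Sum>j<n. L * edge_energy f (p ! j) (p ! Suc j))"
  proof (intro mult_left_mono sum_mono)
    fix j assume "j \<in> {..<n}"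
    then have "1 \<le> L * b (p ! j) (p ! Suc j)"
      using short_path_edge_heavy[OF assms, of j] L_pos by (simp add: n_def field_simps)
    from mult_right_mono[OF this zero_le_power2[of "d j"]]
    show "(d j)\<^sup>2 \<le> L * edge_energy f (p ! j) (p ! Suc j)"
      by (simp add: edge_energy_def d_def power2_commute mult.assoc)
  qed simp
  also have "\<dots> \<le> max_len * (\<Sum>j<n. L * edge_energy f (p ! j) (p ! Suc j))"
    using short_path_length_le[OF assms] L_pos
    by (intro mult_right_mono sum_nonneg) (simp_all add: n_def edge_energy_nonneg)
  finally show ?thesis
    by (simp add: n_def sum_distrib_left mult_ac)
qed

lemma weighted_sq_le_along_path:
  assumes "y \<notin> D" "x \<in> D" "graph_path b p x y" "path_length b p \<le> L"
  shows "m y * (f y)\<^sup>2 \<le> (2 * M * C * L) * (m x * (f x)\<^sup>2)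
           + (2 * M * max_len * L) * (\<Sum>j<length p - 1. edge_energy f (p ! j) (p ! Suc j))"
proof -
  let ?E = "\<Sum>j<length p - 1. edge_energy f (p ! j) (p ! Suc j)"
  have "0 < length p - 1"
    using graph_path_ends[OF assms(3)] assms(1,2) by (metis gr0I)
  then have "1 / L \<le> b x (p ! 1)"
    using short_path_edge_heavy[OF assms(3,4), of 0] graph_path_ends(1)[OF assms(3)] by simp
  also have "\<dots> \<le> C * m x"
    using b_le_deg[of x] deg_le[of x] by (rule order_trans)
  finally have fx: "(f x)\<^sup>2 \<le> C * L * (m x * (f x)\<^sup>2)"
    using L_pos mult_right_mono[of 1 "C * L * m x" "(f x)\<^sup>2"] by (simp add: field_simps)
  have "(u + v)\<^sup>2 \<le> 2 * u\<^sup>2 + 2 * v\<^sup>2" for u v :: real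
    using zero_le_power2[of "u - v"] unfolding power2_sum power2_diff by linarith
  from this[of "f x" "f y - f x"] have "(f y)\<^sup>2 \<le> 2 * (f x)\<^sup>2 + 2 * (f y - f x)\<^sup>2"
    by simp
  with fx sq_diff_le_path_energy[OF assms(3,4), of f]
  have "(f y)\<^sup>2 \<le> 2 * C * L * (m x * (f x)\<^sup>2) + 2 * L * max_len * ?E"
    by linarith
  from mult_left_mono[OF this, of M] M_pos
  have "M * (f y)\<^sup>2 \<le> (2 * M * C * L) * (m x * (f x)\<^sup>2) + (2 * M * max_len * L) * ?E"
    by (simp add: algebra_simps)
  moreover have "m y * (f y)\<^sup>2 \<le> M * (f y)\<^sup>2"
    by (rule mult_right_mono[OF m_le]) simp
  ultimately show ?thesis
    by linarith
qed

definition anchor_path :: "'x \<Rightarrow> 'x \<times> 'x list" where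
  "anchor_path y = (SOME xp. fst xp \<in> D \<and> graph_path b (snd xp) (fst xp) y \<and> path_length b (snd xp) \<le> L)"

abbreviation anchor :: "'x \<Rightarrow> 'x" where
  "anchor y \<equiv> fst (anchor_path y)"

abbreviation walk :: "'x \<Rightarrow> 'x list" where
  "walk y \<equiv> snd (anchor_path y)"

lemma anchor_path:
  assumes "y \<notin> D"
  shows "anchor y \<in> D" "graph_path b (walk y) (anchor y) y" "path_length b (walk y) \<le> L"
proof -
  have "\<exists>xp. fst xp \<in> D \<and> graph_path b (snd xp) (fst xp) y \<and> path_length b (snd xp) \<le> L"
    using short_paths[OF assms] by auto
  then have "anchor y \<in> D \<and> graph_path b (walk y) (anchor y) y \<and> path_length b (walk y) \<le> L"
    unfolding anchor_path_def by (rule someI_ex)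
  then show "anchor y \<in> D" "graph_path b (walk y) (anchor y) y" "path_length b (walk y) \<le> L"
    by simp_all
qed

lemma walk_reach:
  assumes "y \<notin> D" "j < length (walk y)"
  shows "y \<in> reach heavy max_len (walk y ! j)"
  using short_path_reach[OF anchor_path(2,3)[OF assms(1)] assms(2)] .

lemma walk_length_le: "y \<notin> D \<Longrightarrow> length (walk y) - 1 \<le> max_len"
  using short_path_length_le[OF anchor_path(2,3)] .

lemma sum_anchor_le:
  assumes "finite S" "S \<subseteq> - D" "f \<in> l2 UNIV m"
  shows "(\<Sum>y\<in>S. m (anchor y) * (f (anchor y))\<^sup>2) \<le> ball_size * (\<Sum>\<^sub>\<infinity>x\<in>D. m x * (f x)\<^sup>2)"
proof -
  have "(\<Sum>y\<in>S. m (anchor y) * (f (anchor y))\<^sup>2) \<le> ball_size * (\<Sum>x\<in>anchor ` S. m x * (f x)\<^sup>2)"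
  proof (rule sum_fiber_le[OF assms(1), where g = "\<lambda>x. m x * (f x)\<^sup>2" and h = anchor])
    show "0 \<le> m (anchor y) * (f (anchor y))\<^sup>2" for y
      by (rule weighted_sq_nonneg)
    fix x assume "x \<in> anchor ` S"
    have "{y\<in>S. anchor y = x} \<subseteq> reach heavy max_len x"
    proof
      fix y assume y: "y \<in> {y\<in>S. anchor y = x}"
      with assms(2) have "y \<notin> D" by auto
      note ap = anchor_path[OF this]
      have "0 < length (walk y)"
        using ap(2) unfolding graph_path_def by simp
      from walk_reach[OF \<open>y \<notin> D\<close> this] show "y \<in> reach heavy max_len x"
        using graph_path_ends(1)[OF ap(2)] y by simp
    qed
    then have "card {y\<in>S. anchor y = x} \<le> card (reach heavy max_len x)"
      using heavy_reach by (intro card_mono) auto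
    then show "card {y\<in>S. anchor y = x} \<le> ball_size"
      using heavy_reach[of x] by linarith
  qed
  also have "(\<Sum>x\<in>anchor ` S. m x * (f x)\<^sup>2) \<le> (\<Sum>\<^sub>\<infinity>x\<in>D. m x * (f x)\<^sup>2)"
    using assms anchor_path(1) weighted_sq_nonneg unfolding mem_l2_UNIV
    by (intro finite_sum_le_infsum[OF summable_on_subset[OF _ subset_UNIV]]) auto
  finally show ?thesis
    by (simp add: mult_left_mono)
qed

lemma sum_walk_energy_le:
  assumes "finite S" "S \<subseteq> - D" "f \<in> l2 UNIV m"
  shows "(\<Sum>y\<in>S. \<Sum>j<length (walk y) - 1. edge_energy f (walk y ! j) (walk y ! Suc j))
    \<le> (ball_size * max_len) * energy f"
proof -
  define W where "W = Sigma S (\<lambda>y. {..<length (walk y) - 1})"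
  define e where "e w = (walk (fst w) ! snd w, walk (fst w) ! Suc (snd w))" for w
  have "finite W"
    unfolding W_def using assms(1) by auto
  have "(\<Sum>y\<in>S. \<Sum>j<length (walk y) - 1. edge_energy f (walk y ! j) (walk y ! Suc j))
      = (\<Sum>w\<in>W. case_prod (edge_energy f) (e w))"
    unfolding W_def using assms(1)
    by (subst sum.Sigma) (simp_all add: e_def case_prod_beta)
  also have "\<dots> \<le> (ball_size * max_len) * (\<Sum>uv\<in>e ` W. case_prod (edge_energy f) uv)"
  proof (rule sum_fiber_le[OF \<open>finite W\<close>])
    show "0 \<le> case_prod (edge_energy f) (e w)" for w
      by (simp add: case_prod_unfold edge_energy_nonneg)
    fix uv assume "uv \<in> e ` W"
    have "{w\<in>W. e w = uv} \<subseteq> reach heavy max_len (fst uv) \<times> {..<max_len}"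
    proof
      fix w assume w: "w \<in> {w\<in>W. e w = uv}"
      then obtain y j where w_eq: "w = (y, j)" and "y \<in> S" and j: "j < length (walk y) - 1"
        unfolding W_def by auto
      with assms(2) have "y \<notin> D" by auto
      with j have "y \<in> reach heavy max_len (walk y ! j)" "j < max_len"
        using walk_reach walk_length_le[of y] by auto
      then show "w \<in> reach heavy max_len (fst uv) \<times> {..<max_len}"
        using w w_eq by (auto simp: e_def)
    qed
    then have "card {w\<in>W. e w = uv} \<le> card (reach heavy max_len (fst uv) \<times> {..<max_len})"
      using heavy_reach by (intro card_mono) auto
    also have "\<dots> \<le> ball_size * max_len"
      using heavy_reach by (simp add: card_cartesian_product)
    finally show "card {w\<in>W. e w = uv} \<le> ball_size * max_len" .
  qed
  also have "(\<Sum>uv\<in>e ` W. case_prod (edge_energy f) uv) \<le> energy f"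
    unfolding energy_def using \<open>finite W\<close>
    by (intro finite_sum_le_infsum summable_edge_energy assms(3)) (auto simp: edge_energy_nonneg)
  finally show ?thesis
    by (simp add: mult_left_mono)
qed

lemma infsum_outside_le:
  assumes f: "f \<in> l2 UNIV m"
  shows "(\<Sum>\<^sub>\<infinity>y\<in>-D. m y * (f y)\<^sup>2)
    \<le> (2 * M * C * L * ball_size) * (\<Sum>\<^sub>\<infinity>x\<in>D. m x * (f x)\<^sup>2)
      + (2 * M * max_len * L * (ball_size * max_len)) * energy f"
proof (rule infsum_le_finite_sums)
  show "(\<lambda>y. m y * (f y)\<^sup>2) summable_on - D"
    using f unfolding mem_l2_UNIV by (rule summable_on_subset) simp
  fix S assume S: "finite S" "S \<subseteq> - D"
  let ?E = "\<lambda>y. \<Sum>j<length (walk y) - 1. edge_energy f (walk y ! j) (walk y ! Suc j)"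
  have "(\<Sum>y\<in>S. m y * (f y)\<^sup>2)
      \<le> (\<Sum>y\<in>S. (2 * M * C * L) * (m (anchor y) * (f (anchor y))\<^sup>2) + (2 * M * max_len * L) * ?E y)"
  proof (rule sum_mono)
    fix y assume "y \<in> S"
    with S have "y \<notin> D" by auto
    from weighted_sq_le_along_path[OF this anchor_path[OF this]]
    show "m y * (f y)\<^sup>2 \<le> (2 * M * C * L) * (m (anchor y) * (f (anchor y))\<^sup>2)
      + (2 * M * max_len * L) * ?E y" .
  qed
  also have "\<dots> = (2 * M * C * L) * (\<Sum>y\<in>S. m (anchor y) * (f (anchor y))\<^sup>2)
      + (2 * M * max_len * L) * (\<Sum>y\<in>S. ?E y)"
    by (simp add: sum.distrib sum_distrib_left)
  also have "\<dots> \<le> (2 * M * C * L) * (ball_size * (\<Sum>\<^sub>\<infinity>x\<in>D. m x * (f x)\<^sup>2))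
      + (2 * M * max_len * L) * ((ball_size * max_len) * energy f)"
    using M_pos C_pos L_pos
    by (intro add_mono mult_left_mono sum_anchor_le sum_walk_energy_le S f) simp_all
  finally show "(\<Sum>y\<in>S. m y * (f y)\<^sup>2)
    \<le> (2 * M * C * L * ball_size) * (\<Sum>\<^sub>\<infinity>x\<in>D. m x * (f x)\<^sup>2)
      + (2 * M * max_len * L * (ball_size * max_len)) * energy f"
    by (simp add: mult_ac)
qed

lemma observability:
  obtains c where "c > 0" and "\<And>f. f \<in> l2 UNIV m \<Longrightarrow>
    (\<Sum>\<^sub>\<infinity>x. m x * (f x)\<^sup>2) \<le> c * ((\<Sum>\<^sub>\<infinity>x\<in>D. m x * (f x)\<^sup>2) + energy f / 2)"
proof
  define c1 where "c1 = 2 * M * C * L * ball_size"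
  define c2 where "c2 = 2 * M * max_len * L * (ball_size * max_len)"
  have "0 \<le> c1" "0 \<le> c2"
    unfolding c1_def c2_def using M_pos C_pos L_pos by simp_all
  then show "1 + c1 + 2 * c2 > 0"
    by simp
  fix f assume f: "f \<in> l2 UNIV m"
  let ?D = "\<Sum>\<^sub>\<infinity>x\<in>D. m x * (f x)\<^sup>2"
  have "?D \<ge> 0"
    by (intro infsum_nonneg weighted_sq_nonneg)
  have "(\<Sum>\<^sub>\<infinity>x. m x * (f x)\<^sup>2) = ?D + (\<Sum>\<^sub>\<infinity>x\<in>-D. m x * (f x)\<^sup>2)"
    using f unfolding mem_l2_UNIV
    by (subst infsum_Un_disjoint[symmetric]) (auto intro: summable_on_subset)
  also have "\<dots> \<le> ?D + c1 * ?D + c2 * energy f"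
    using infsum_outside_le[OF f] by (simp add: c1_def c2_def)
  also have "\<dots> \<le> (1 + c1 + 2 * c2) * (?D + energy f / 2)"
  proof -
    have "(1 + c1 + 2 * c2) * (?D + energy f / 2)
        = ?D + c1 * ?D + c2 * energy f + (2 * c2 * ?D + (1 + c1) * energy f / 2)"
      by (simp add: field_simps)
    moreover have "0 \<le> 2 * c2 * ?D + (1 + c1) * energy f / 2"
      using \<open>0 \<le> c1\<close> \<open>0 \<le> c2\<close> \<open>?D \<ge> 0\<close> energy_nonneg[of f] by simp
    ultimately show ?thesis
      by linarith
  qed
  finally show "(\<Sum>\<^sub>\<infinity>x. m x * (f x)\<^sup>2) \<le> (1 + c1 + 2 * c2) * (?D + energy f / 2)" .
qed

section \<open>The stabilizing feedback\<close>

definition feedback :: "('x \<Rightarrow> real) \<Rightarrow> ('x \<Rightarrow> real)" where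
  "feedback f = (\<lambda>x. if x \<in> D then - f x else 0)"

definition closed_loop :: "('x \<Rightarrow> real) \<Rightarrow> ('x \<Rightarrow> real)" where
  "closed_loop f = (\<lambda>x. - laplacian b m f x + ext_zero D (feedback f) x)"

lemma bounded_linear_op_feedback:
  assumes "D \<subseteq> S"
  shows "bounded_linear_op UNIV S m feedback"
  unfolding bounded_linear_op_def
proof (intro conjI ballI allI exI[of _ 1])
  fix f assume "f \<in> l2 UNIV m"
  then have summable: "(\<lambda>x. m x * (feedback f x)\<^sup>2) summable_on S"
    unfolding mem_l2_UNIV feedback_def
    by (rule summable_on_comparison_test[OF summable_on_subset[OF _ subset_UNIV]])
      (simp_all add: weighted_sq_nonneg)
  then show "feedback f \<in> l2 S m"
    using assms by (auto simp: l2_def feedback_def)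
  have "(\<Sum>\<^sub>\<infinity>x\<in>S. m x * (feedback f x)\<^sup>2) \<le> (\<Sum>\<^sub>\<infinity>x. m x * (f x)\<^sup>2)"
    using \<open>f \<in> l2 UNIV m\<close> unfolding mem_l2_UNIV
    by (intro infsum_mono_neutral[OF summable]) (auto simp: feedback_def weighted_sq_nonneg)
  then show "l2norm S m (feedback f) \<le> 1 * l2norm UNIV m f"
    by (simp add: l2norm_def)
qed (auto simp: feedback_def)

lemma ext_zero_feedback: "ext_zero D (feedback f) = feedback f"
  by (auto simp: ext_zero_def feedback_def)

lemma bounded_linear_op_closed_loop: "bounded_linear_op UNIV UNIV m closed_loop"
proof -
  have "closed_loop = (\<lambda>f x. (- 1) * laplacian b m f x + feedback f x)"
    by (intro ext) (simp add: closed_loop_def ext_zero_feedback)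
  then show ?thesis
    by (simp only:) (intro bounded_linear_op_lincomb bounded_linear_op_laplacian
        bounded_linear_op_feedback subset_UNIV)
qed

lemma closed_loop_dissipative:
  obtains \<delta> where "\<delta> > 0" and "\<And>f. f \<in> l2 UNIV m \<Longrightarrow>
    (\<Sum>\<^sub>\<infinity>x. m x * closed_loop f x * f x) \<le> - \<delta> * (\<Sum>\<^sub>\<infinity>x. m x * (f x)\<^sup>2)"
proof -
  obtain c where "c > 0" and c: "\<And>f. f \<in> l2 UNIV m \<Longrightarrow>
      (\<Sum>\<^sub>\<infinity>x. m x * (f x)\<^sup>2) \<le> c * ((\<Sum>\<^sub>\<infinity>x\<in>D. m x * (f x)\<^sup>2) + energy f / 2)"
    using observability by blast
  show ?thesis
  proof (rule that[of "1 / c"])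
    fix f assume f: "f \<in> l2 UNIV m"
    have feedback_part: "(\<Sum>\<^sub>\<infinity>x. m x * ext_zero D (feedback f) x * f x) = - (\<Sum>\<^sub>\<infinity>x\<in>D. m x * (f x)\<^sup>2)"
      by (subst infsum_cong_neutral[where T = D and g = "\<lambda>x. - (m x * (f x)\<^sup>2)"])
        (auto simp: ext_zero_def feedback_def power2_eq_square infsum_uminus)
    have "(\<Sum>\<^sub>\<infinity>x. m x * closed_loop f x * f x)
        = (\<Sum>\<^sub>\<infinity>x. m x * ext_zero D (feedback f) x * f x) - (\<Sum>\<^sub>\<infinity>x. m x * laplacian b m f x * f x)"
    proof -
      have "ext_zero D (feedback f) \<in> l2 UNIV m" "laplacian b m f \<in> l2 UNIV m"
        using bounded_linear_op_feedback[of UNIV] f laplacian_in_l2(1)[OF f]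
        by (auto simp: bounded_linear_op_def ext_zero_feedback)
      then have "(\<Sum>\<^sub>\<infinity>x. m x * ext_zero D (feedback f) x * f x - m x * laplacian b m f x * f x)
          = (\<Sum>\<^sub>\<infinity>x. m x * ext_zero D (feedback f) x * f x) - (\<Sum>\<^sub>\<infinity>x. m x * laplacian b m f x * f x)"
        by (intro infsum_diff summable_l2_mult f)
      then show ?thesis
        by (simp add: closed_loop_def algebra_simps)
    qed
    also have "\<dots> = - ((\<Sum>\<^sub>\<infinity>x\<in>D. m x * (f x)\<^sup>2) + energy f / 2)"
      by (simp add: feedback_part green_formula f)
    also have "\<dots> \<le> - (1 / c) * (\<Sum>\<^sub>\<infinity>x. m x * (f x)\<^sup>2)"
      using c[OF f] \<open>c > 0\<close> by (simp add: field_simps)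
    finally show "(\<Sum>\<^sub>\<infinity>x. m x * closed_loop f x * f x) \<le> - (1 / c) * (\<Sum>\<^sub>\<infinity>x. m x * (f x)\<^sup>2)" .
  qed (use \<open>c > 0\<close> in simp)
qed

lemma closed_loop_exponentially_stable:
  obtains \<omega> where "\<omega> < 0" and "\<And>t f. t \<ge> 0 \<Longrightarrow> f \<in> l2 UNIV m \<Longrightarrow>
    l2norm UNIV m (op_exp closed_loop t f) \<le> exp (\<omega> * t) * l2norm UNIV m f"
proof -
  obtain \<delta> where "\<delta> > 0" and "\<And>f. f \<in> l2 UNIV m \<Longrightarrow>
      (\<Sum>\<^sub>\<infinity>x. m x * closed_loop f x * f x) \<le> - \<delta> * (\<Sum>\<^sub>\<infinity>x. m x * (f x)\<^sup>2)"
    using closed_loop_dissipative by blast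
  with op_exp_decay[OF bounded_linear_op_closed_loop] show ?thesis
    by (intro that[of "- \<delta>"]) auto
qed

end

lemma bounded_degree_le:
  assumes "weighted_graph b m" "bounded_degree b m"
  obtains C where "C > 0" "\<And>x. (\<Sum>\<^sub>\<infinity>y. b x y) \<le> C * m x"
proof -
  obtain C where C: "\<And>x. (1 / m x) * (\<Sum>\<^sub>\<infinity>y. b x y) \<le> C"
    using assms(2) unfolding bounded_degree_def by blast
  have "(\<Sum>\<^sub>\<infinity>y. b x y) \<le> max C 1 * m x" for x
  proof -
    have "m x > 0"
      using assms(1) unfolding weighted_graph_def by blast
    with C[of x] have "(\<Sum>\<^sub>\<infinity>y. b x y) \<le> C * m x"
      by (simp add: field_simps)
    also have "\<dots> \<le> max C 1 * m x"
      using \<open>m x > 0\<close> by (intro mult_right_mono) auto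
    finally show ?thesis .
  qed
  then show ?thesis
    by (intro that[of "max C 1"]) auto
qed

lemma relatively_dense_short_paths:
  assumes "connected_graph b" "relatively_dense b D"
  obtains L where "L > 0" "\<And>y. \<exists>x\<in>D. \<exists>p. graph_path b p x y \<and> path_length b p \<le> L"
proof -
  obtain R where "R > 0" and R: "(\<Union>x\<in>D. {y. dL b x y \<le> R}) = UNIV"
    using assms(2) unfolding relatively_dense_def by blast
  have "\<exists>x\<in>D. \<exists>p. graph_path b p x y \<and> path_length b p \<le> R + 1" for y
  proof -
    have "y \<in> (\<Union>x\<in>D. {y. dL b x y \<le> R})"
      using R by simp
    then obtain x where "x \<in> D" and x: "dL b x y \<le> R"
      by blast
    define lengths where "lengths = {path_length b p | p. graph_path b p x y}"
    have "lengths \<noteq> {}"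
      using assms(1) unfolding connected_graph_def lengths_def by blast
    moreover have "Inf lengths < R + 1"
      using x unfolding dL_def lengths_def by simp
    ultimately obtain l where "l \<in> lengths" "l < R + 1"
      using cInf_lessD by blast
    then obtain p where "graph_path b p x y" "path_length b p \<le> R + 1"
      unfolding lengths_def by force
    with \<open>x \<in> D\<close> show ?thesis
      by blast
  qed
  then show ?thesis
    using that[of "R + 1"] \<open>R > 0\<close> by simp
qed

theorem mainTheorem7:
  fixes b :: "'x::countable \<Rightarrow> 'x \<Rightarrow> real" and m :: "'x \<Rightarrow> real" and D :: "'x set"
  assumes "weighted_graph b m"
    and "connected_graph b"
    and "bounded_degree b m"
    and "bounded_measure m"
    and "D \<noteq> UNIV"
    and "relatively_dense b D"
  shows "\<exists>F. bounded_linear_op UNIV D m F \<and>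
           (\<exists>S. generates m (\<lambda>f x. - laplacian b m f x + ext_zero D (F f) x) S \<and>
              (\<exists>M \<omega>. M \<ge> 1 \<and> \<omega> < 0 \<and>
                 (\<forall>t\<ge>0. \<forall>f\<in>l2 UNIV m. l2norm UNIV m (S t f) \<le> M * exp (\<omega> * t) * l2norm UNIV m f)))"
proof -
  obtain C where "C > 0" "\<And>x. (\<Sum>\<^sub>\<infinity>y. b x y) \<le> C * m x"
    using bounded_degree_le[OF assms(1,3)] by blast
  moreover obtain M where "\<And>x. m x \<le> M"
    using assms(4) unfolding bounded_measure_def by blast
  moreover obtain L where "L > 0" "\<And>y. \<exists>x\<in>D. \<exists>p. graph_path b p x y \<and> path_length b p \<le> L"
    using relatively_dense_short_paths[OF assms(2,6)] by metis
  ultimately interpret dense_wgraph m b C D L M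
    using assms(1) unfolding weighted_graph_def by unfold_locales auto
  obtain \<omega> where "\<omega> < 0" and \<omega>: "\<And>t f. t \<ge> 0 \<Longrightarrow> f \<in> l2 UNIV m \<Longrightarrow>
      l2norm UNIV m (op_exp closed_loop t f) \<le> exp (\<omega> * t) * l2norm UNIV m f"
    using closed_loop_exponentially_stable by blast
  show ?thesis
  proof (intro exI conjI)
    show "bounded_linear_op UNIV D m feedback"
      by (rule bounded_linear_op_feedback) simp
    show "generates m (\<lambda>f x. - laplacian b m f x + ext_zero D (feedback f) x) (op_exp closed_loop)"
      using generates_op_exp[OF bounded_linear_op_closed_loop] by (simp add: closed_loop_def[abs_def])
    show "\<forall>t\<ge>0. \<forall>f\<in>l2 UNIV m. l2norm UNIV m (op_exp closed_loop t f) \<le> 1 * exp (\<omega> * t) * l2norm UNIV m f"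
      using \<omega> by simp
  qed (use \<open>\<omega> < 0\<close> in simp_all)
qed

end
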